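(* Under the standing assumptions, there exists $\Lambda>0$ such that for every $\lambda>\Lambda$ the KDV-type operator $\mathcal{A}^\lambda$ has no eigenvalues in $\{z\in\mathbb{C}:\operatorname{Re}z\le0\}$.
   Context: Standing assumptions: $f:\mathbb{R}\to\mathbb{R}$ is $C^1$ with $f(0)=f'(0)=0$. $\mathcal{M}$ is the Fourier multiplier with symbol $\alpha:\mathbb{R}\to[0,\infty)$, locally bounded, $a|k|^m\le\alpha(k)\le b|k|^m$ for all large $|k|$ ($m\ge1$, $a,b>0$). For $c>0$, $u_c\in H^m(\mathbb{R})$ is a real solution of $\mathcal{M}u_c+cu_c-f(u_c)=0$ with $u_c(x)\to0$ as $|x|\to\infty$. For $\lambda>0$, $\mathcal{A}^\lambda u=cu+\frac{c\partial_x}{\lambda-c\partial_x}\big(f'(u_c)u-\mathcal{M}u\big)$, where $\frac{c\partial_x}{\lambda-c\partial_x}$ is the Fourier multiplier with symbol $\frac{ick}{\lambda-ick}$; domain $H^m$. *)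

theory Defs
  imports "HOL-Analysis.Analysis"
begin

definition sq_integrable :: "(real \<Rightarrow> complex) \<Rightarrow> bool" where
  "sq_integrable h \<longleftrightarrow> h \<in> borel_measurable lborel \<and>
     integrable lborel (\<lambda>x. (cmod (h x))^2)"

definition fourier_L1 :: "(real \<Rightarrow> complex) \<Rightarrow> real \<Rightarrow> complex" where
  "fourier_L1 \<phi> \<xi> = integral\<^sup>L lborel (\<lambda>x. exp (- (\<i> * of_real (\<xi> * x))) * \<phi> x)"

text \<open>g is the (Plancherel) L^2 Fourier transform of h, characterised by duality
  against the dense class L^1 \<inter> L^2:  int g phi = int h (hat phi).\<close>
definition is_fourier_L2 :: "(real \<Rightarrow> complex) \<Rightarrow> (real \<Rightarrow> complex) \<Rightarrow> bool" where
  "is_fourier_L2 h g \<longleftrightarrow> sq_integrable h \<and> sq_integrable g \<and>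
     (\<forall>\<phi>. integrable lborel \<phi> \<and> sq_integrable \<phi> \<longrightarrow>
        integral\<^sup>L lborel (\<lambda>k. g k * \<phi> k) = integral\<^sup>L lborel (\<lambda>x. h x * fourier_L1 \<phi> x))"

definition sobolev_H :: "real \<Rightarrow> (real \<Rightarrow> complex) \<Rightarrow> bool" where
  "sobolev_H m u \<longleftrightarrow> (\<exists>U. is_fourier_L2 u U \<and>
     integrable lborel (\<lambda>k. (1 + k^2) powr m * (cmod (U k))^2))"

text \<open>z is an eigenvalue of A^lambda u = c u + (c d/dx)/(lambda - c d/dx) (f'(u_c) u - M u)
  on the (complexified) domain H^m: there is a nonzero u in H^m with A^lambda u = z u.
  The identity is expressed on the Fourier side (U = F u, G = F(f'(u_c) u)),
  where M has symbol alpha and (c d/dx)/(lambda - c d/dx) has symbol ick/(lambda - ick).\<close>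
definition kdv_eigenvalue ::
  "(real \<Rightarrow> real) \<Rightarrow> (real \<Rightarrow> real) \<Rightarrow> real \<Rightarrow> real \<Rightarrow> (real \<Rightarrow> real) \<Rightarrow> real \<Rightarrow> complex \<Rightarrow> bool" where
  "kdv_eigenvalue f' \<alpha> m c uc lam z \<longleftrightarrow>
     (\<exists>u U G. sobolev_H m u \<and> is_fourier_L2 u U \<and>
        is_fourier_L2 (\<lambda>x. complex_of_real (f' (uc x)) * u x) G \<and>
        \<not> (AE x in lborel. u x = 0) \<and>
        (AE k in lborel.
           of_real c * U k
           + (\<i> * of_real k * of_real c / (of_real lam - \<i> * of_real c * of_real k))
             * (G k - of_real (\<alpha> k) * U k)
           = z * U k))"

end

theory Submission
  imports Defs "HOL-Probability.Probability"
begin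

(* Let u be an eigenfunction of A^lambda for an eigenvalue z with Re z <= 0, and write
   U = F u, G = F (f'(u_c) u).  Solving the eigenvalue equation for G gives G = w(k) U with
   |w(k)|^2 >= lambda^2/k^2 + 2 c alpha(k), and by the growth of alpha this is >= M for all k <> 0
   once lambda is large, M being any prescribed constant.  On the other hand the coefficient
   q = f'(u_c) agrees a.e. with a continuous function bounded by some Q, because for m >= 1 the
   transform of u_c is integrable.  Multiplication by q can enlarge the L^2 norm of the transform
   by at most a factor 2 Q^2 (squared norms), so choosing M > 2 Q^2 forces U = 0, hence u = 0.

   The transform of Defs is defined by duality, without a Plancherel theorem, so L^2 norms are
   compared through Gaussian damping: int |V|^2 exp(-e k^2) = (1/e) int |heat_conv e v|^2, where
   heat_conv e v is v convolved with the heat kernel of variance e.  A commutator estimate bounds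
   heat_conv e (q u) by Q heat_conv e u plus an error that vanishes as e -> 0 by continuity of q.
   Uniqueness of the transform is derived from Levy's uniqueness theorem. *)

subsection \<open>Gaussian integrals\<close>

text \<open>Gaussians exp(-a (x - t)^2), a > 0, are integrable (an affine image of the normal density).\<close>
lemma integrable_gaussian:
  assumes "a > 0"
  shows "integrable lborel (\<lambda>x::real. exp (- a * (x - t)^2))"
proof -
  define c where "c = sqrt (2*a)"
  have c: "c > 0" using assms by (simp add: c_def)
  have "integrable lborel std_normal_density"
    using integrable_std_normal_moment[of 0] by simp
  then have "integrable lborel (\<lambda>x. std_normal_density (- c*t + c * x))"
    using lborel_integrable_real_affine[of std_normal_density c "-c*t"] c by simp
  then have "integrable lborel (\<lambda>x. sqrt (2*pi) * std_normal_density (- c*t + c * x))"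
    by (rule integrable_mult_right)
  moreover have eq: "sqrt (2*pi) * std_normal_density (- c*t + c * x) = exp (- a * (x - t)^2)" for x
  proof -
    have "(- c*t + c*x)^2 = 2*a*(x-t)^2" using assms
      by (simp add: c_def power2_eq_square algebra_simps real_sqrt_mult[symmetric])
    then show ?thesis by (simp add: std_normal_density_def)
  qed
  ultimately show ?thesis unfolding eq by blast
qed

text \<open>The Fourier transform of a Gaussian, obtained from the characteristic function of the
  standard normal distribution by an affine change of variables.\<close>
lemma fourier_gaussian:
  assumes a: "a > 0"
  shows "(LINT k|lborel. exp (- (\<i> * of_real (xi * k))) * of_real (exp (- a * (k - t)^2)))
       = exp (- (\<i> * of_real (xi * t))) * of_real (sqrt (pi / a) * exp (- (xi^2) / (4 * a)))"
proof -
  have char_normal: "(LINT x|lborel. std_normal_density x *\<^sub>R iexp (s*x)) = complex_of_real (exp (- (s^2) / 2))" for s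
  proof -
    have "char std_normal_distribution s = complex_of_real (exp (- (s^2) / 2))"
      by (simp add: char_std_normal_distribution)
    then show ?thesis
      unfolding char_def by (subst (asm) integral_density) (auto simp: normal_density_nonneg)
  qed
  define c where "c = 1 / sqrt (2*a)"
  have c: "c > 0" using a by (simp add: c_def)
  define f where "f k = exp (- (\<i> * of_real (xi * k))) * of_real (exp (- a * (k - t)^2))" for k
  have "(LINT k|lborel. f k) = \<bar>c\<bar> *\<^sub>R (LINT x|lborel. f (t + c * x))"
    by (rule lborel_integral_real_affine) (use c in simp)
  also have "(\<lambda>x. f (t + c * x)) = (\<lambda>x. (exp (- (\<i> * of_real (xi * t))) * sqrt (2*pi)) * (std_normal_density x *\<^sub>R iexp ((- xi * c) * x)))"
  proof
    fix x
    have "a * (c*x)^2 = x^2/2" using a by (simp add: c_def power2_eq_square field_simps)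
    then have e1: "exp (- a * (t + c*x - t)^2) = sqrt (2*pi) * std_normal_density x"
      by (simp add: std_normal_density_def)
    have e2: "exp (- (\<i> * of_real (xi * (t + c*x)))) = exp (- (\<i> * of_real (xi * t))) * iexp ((- xi * c) * x)"
      by (simp add: algebra_simps exp_add[symmetric])
    show "f (t + c * x) = (exp (- (\<i> * of_real (xi * t))) * sqrt (2*pi)) * (std_normal_density x *\<^sub>R iexp ((- xi * c) * x))"
      unfolding f_def e1 e2 by (simp add: scaleR_conv_of_real)
  qed
  also have "(LINT x|lborel. (exp (- (\<i> * of_real (xi * t))) * sqrt (2*pi)) * (std_normal_density x *\<^sub>R iexp ((- xi * c) * x)))
      = (exp (- (\<i> * of_real (xi * t))) * sqrt (2*pi)) * exp (- ((- xi * c)^2) / 2)"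
    by (subst integral_mult_right_zero) (simp only: char_normal)
  also have "\<bar>c\<bar> *\<^sub>R ((exp (- (\<i> * of_real (xi * t))) * sqrt (2*pi)) * exp (- ((- xi * c)^2) / 2))
      = exp (- (\<i> * of_real (xi * t))) * of_real (sqrt (pi / a) * exp (- (xi^2) / (4 * a)))"
  proof -
    have "c * sqrt (2*pi) = sqrt (pi/a)" using a
      by (simp add: c_def real_sqrt_divide real_sqrt_mult field_simps)
    moreover have "(- xi * c)^2 / 2 = xi^2 / (4*a)" using a
      by (simp add: c_def power2_eq_square field_simps)
    ultimately show ?thesis using c
      by (simp add: scaleR_conv_of_real mult.assoc mult.left_commute[of "complex_of_real c"]
           flip: of_real_mult)
  qed
  finally show ?thesis unfolding f_def .
qed

text \<open>The Gaussian integral, read off from the transform at frequency 0.\<close>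
lemma gaussian_integral:
  assumes a: "a > 0"
  shows "(LINT k|lborel. exp (- a * (k - t)^2)) = sqrt (pi / a)"
proof -
  have "complex_of_real (LINT k|lborel. exp (- a * (k - t)^2))
      = (LINT k|lborel. exp (- (\<i> * of_real (0 * k))) * of_real (exp (- a * (k - t)^2)))"
    by simp
  also have "\<dots> = of_real (sqrt (pi / a))"
    by (subst fourier_gaussian[OF a]) simp
  finally show ?thesis by simp
qed

lemma heat_kernel_integral:
  assumes e: "e > 0"
  shows "integrable lborel (\<lambda>x. exp (- ((x - s)^2) / (2*e)))"
    and "(LINT x|lborel. exp (- ((x - s)^2) / (2*e))) = sqrt (2*pi*e)"
    and "integrable lborel (\<lambda>s. exp (- ((x - s)^2) / (2*e)))"
    and "(LINT s|lborel. exp (- ((x - s)^2) / (2*e))) = sqrt (2*pi*e)"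
proof -
  have eq: "(\<lambda>x. exp (- ((x - s)^2) / (2*e))) = (\<lambda>x. exp (- (1/(2*e)) * (x - s)^2))" for s
    by (rule ext) simp
  show int: "integrable lborel (\<lambda>x. exp (- ((x - s)^2) / (2*e)))" for s
    unfolding eq by (rule integrable_gaussian) (use e in simp)
  show val: "(LINT x|lborel. exp (- ((x - s)^2) / (2*e))) = sqrt (2*pi*e)" for s
    unfolding eq by (subst gaussian_integral) (use e in \<open>auto simp: field_simps\<close>)
  show "integrable lborel (\<lambda>s. exp (- ((x - s)^2) / (2*e)))"
    using int[of x] by (simp add: power2_commute)
  show "(LINT s|lborel. exp (- ((x - s)^2) / (2*e))) = sqrt (2*pi*e)"
    using val[of x] by (simp add: power2_commute)
qed

lemma heat_kernel_product:
  assumes e: "e > 0"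
  shows "integrable lborel (\<lambda>s. exp (- ((x - s)^2) / (2*e)) * exp (- ((y - s)^2) / (2*e)))"
    and "(LINT s|lborel. exp (- ((x - s)^2) / (2*e)) * exp (- ((y - s)^2) / (2*e)))
          = sqrt (pi*e) * exp (- ((y - x)^2) / (4*e))"
proof -
  define m where "m = (x + y) / 2"
  have eq: "exp (- ((x - s)^2) / (2*e)) * exp (- ((y - s)^2) / (2*e))
          = exp (- ((y - x)^2) / (4*e)) * exp (- (1/e) * (s - m)^2)" for s
  proof -
    have "- ((x - s)^2) / (2*e) + - ((y - s)^2) / (2*e) = - ((y - x)^2) / (4*e) + - (1/e) * (s - m)^2"
      using e by (simp add: m_def field_simps power2_eq_square)
    then show ?thesis by (simp add: exp_add[symmetric])
  qed
  show "integrable lborel (\<lambda>s. exp (- ((x - s)^2) / (2*e)) * exp (- ((y - s)^2) / (2*e)))"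
    unfolding eq by (intro integrable_mult_right integrable_gaussian) (use e in simp)
  have "(LINT s|lborel. exp (- ((x - s)^2) / (2*e)) * exp (- ((y - s)^2) / (2*e)))
      = exp (- ((y - x)^2) / (4*e)) * (LINT s|lborel. exp (- (1/e) * (s - m)^2))"
    unfolding eq by simp
  also have "\<dots> = exp (- ((y - x)^2) / (4*e)) * sqrt (pi * e)"
    by (subst gaussian_integral) (use e in auto)
  finally show "(LINT s|lborel. exp (- ((x - s)^2) / (2*e)) * exp (- ((y - s)^2) / (2*e)))
          = sqrt (pi*e) * exp (- ((y - x)^2) / (4*e))" by simp
qed

subsection \<open>Square integrable functions\<close>

lemma sq_integrable_measurable: "sq_integrable v \<Longrightarrow> v \<in> borel_measurable borel"
  unfolding sq_integrable_def by simp

lemma sq_integrable_bound: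
  assumes "sq_integrable f" "g \<in> borel_measurable lborel" "\<And>x. cmod (g x) \<le> cmod (f x)"
  shows "sq_integrable g"
  unfolding sq_integrable_def
proof (intro conjI)
  show "g \<in> borel_measurable lborel" by fact
  show "integrable lborel (\<lambda>x. (cmod (g x))\<^sup>2)"
    by (rule Bochner_Integration.integrable_bound[of _ "\<lambda>x. (cmod (f x))\<^sup>2"])
       (use assms in \<open>auto simp: sq_integrable_def intro!: power_mono\<close>)
qed

text \<open>The product of two square integrable functions is integrable (AM-GM pointwise).\<close>
lemma sq_integrable_product_integrable:
  assumes "sq_integrable f" "sq_integrable g"
  shows "integrable lborel (\<lambda>x. f x * g x)"
proof (rule Bochner_Integration.integrable_bound[of _ "\<lambda>x. ((cmod (f x))\<^sup>2 + (cmod (g x))\<^sup>2) / 2"])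
  show "integrable lborel (\<lambda>x. ((cmod (f x))\<^sup>2 + (cmod (g x))\<^sup>2) / 2)"
    using assms unfolding sq_integrable_def by auto
  show "(\<lambda>x. f x * g x) \<in> borel_measurable lborel"
    using assms unfolding sq_integrable_def by auto
  show "AE x in lborel. norm (f x * g x) \<le> norm (((cmod (f x))\<^sup>2 + (cmod (g x))\<^sup>2) / 2)"
  proof (intro AE_I2)
    fix x
    have "0 \<le> (cmod (f x) - cmod (g x))^2" by simp
    then have "cmod (f x) * cmod (g x) \<le> ((cmod (f x))\<^sup>2 + (cmod (g x))\<^sup>2) / 2"
      by (simp add: power2_eq_square algebra_simps)
    then show "norm (f x * g x) \<le> norm (((cmod (f x))\<^sup>2 + (cmod (g x))\<^sup>2) / 2)"
      by (simp add: norm_mult)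
  qed
qed

text \<open>Gaussians times characters are square integrable; they serve as test functions.\<close>
lemma sq_integrable_modulated_gaussian:
  assumes a: "a > 0"
  shows "sq_integrable (\<lambda>k. exp (- (\<i> * of_real (xi * k))) * of_real (exp (- a * (k - t)^2)))"
  unfolding sq_integrable_def
proof (intro conjI)
  show "(\<lambda>k. exp (- (\<i> * of_real (xi * k))) * of_real (exp (- a * (k - t)^2))) \<in> borel_measurable lborel"
    by measurable
  have "(\<lambda>k. (cmod (exp (- (\<i> * of_real (xi * k))) * of_real (exp (- a * (k - t)^2))))\<^sup>2)
      = (\<lambda>k. exp (- (2*a) * (k - t)^2))"
    by (rule ext) (simp add: norm_mult power2_eq_square exp_add[symmetric])
  then show "integrable lborel (\<lambda>k. (cmod (exp (- (\<i> * of_real (xi * k))) * of_real (exp (- a * (k - t)^2))))\<^sup>2)"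
    using integrable_gaussian[of "2*a" t] a by simp
qed

lemma sq_integrable_gaussian:
  assumes a: "a > 0"
  shows "sq_integrable (\<lambda>x. complex_of_real (C * exp (- ((x - s)^2) / a)))"
proof -
  have "sq_integrable (\<lambda>k. exp (- (\<i> * of_real (0 * k))) * of_real (exp (- (1/a) * (k - s)^2)))"
    by (rule sq_integrable_modulated_gaussian) (use a in simp)
  then have g: "sq_integrable (\<lambda>x. complex_of_real (exp (- ((x - s)^2) / a)))" by simp
  show ?thesis
  proof (rule sq_integrable_bound[of "\<lambda>x. (\<bar>C\<bar>+1) * complex_of_real (exp (- ((x - s)^2) / a))"])
    show "sq_integrable (\<lambda>x. (\<bar>C\<bar>+1) * complex_of_real (exp (- ((x - s)^2) / a)))"
      using g unfolding sq_integrable_def by (simp add: norm_mult power_mult_distrib)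
    show "(\<lambda>x. complex_of_real (C * exp (- ((x - s)^2) / a))) \<in> borel_measurable lborel" by measurable
    fix x show "cmod (complex_of_real (C * exp (- ((x - s)^2) / a))) \<le> cmod ((\<bar>C\<bar>+1) * complex_of_real (exp (- ((x - s)^2) / a)))"
      by (simp add: norm_mult abs_mult)
  qed
qed

lemma integrable_gaussian_weighted:
  assumes vs: "sq_integrable v" and a: "a > 0"
  shows "integrable lborel (\<lambda>x. v x * of_real (exp (- ((x - s)^2) / a)))"
  using sq_integrable_product_integrable[OF vs sq_integrable_gaussian[OF a, of 1 s]] by simp

lemma sq_integrable_bounded_multiple:
  assumes us: "sq_integrable u" and [measurable]: "q \<in> borel_measurable borel" and qb: "\<And>x. \<bar>q x\<bar> \<le> Q"
  shows "sq_integrable (\<lambda>x. complex_of_real (q x) * u x)"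
proof (rule sq_integrable_bound[of "\<lambda>x. complex_of_real Q * u x"])
  have [measurable]: "u \<in> borel_measurable borel" using sq_integrable_measurable[OF us] .
  show "sq_integrable (\<lambda>x. complex_of_real Q * u x)"
    using us unfolding sq_integrable_def by (simp add: norm_mult power_mult_distrib)
  show "(\<lambda>x. complex_of_real (q x) * u x) \<in> borel_measurable lborel" by measurable
  fix x
  have Q0: "0 \<le> Q" using qb[of x] by linarith
  show "cmod (complex_of_real (q x) * u x) \<le> cmod (complex_of_real Q * u x)"
    using qb[of x] Q0 by (simp add: norm_mult mult_right_mono)
qed

lemma weighted_cauchy_schwarz:
  fixes f w :: "real \<Rightarrow> real"
  assumes [measurable]: "f \<in> borel_measurable borel" "w \<in> borel_measurable borel"
    and wn: "\<And>x. w x \<ge> 0" and wi: "integrable lborel w" and fi: "integrable lborel (\<lambda>x. (f x)^2 * w x)"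
  shows "integrable lborel (\<lambda>x. f x * w x)"
    and "(LINT x|lborel. f x * w x)^2 \<le> (LINT x|lborel. w x) * (LINT x|lborel. (f x)^2 * w x)"
proof -
  show fwi: "integrable lborel (\<lambda>x. f x * w x)"
  proof (rule Bochner_Integration.integrable_bound[of _ "\<lambda>x. ((f x)^2 * w x + w x) / 2"])
    show "integrable lborel (\<lambda>x. ((f x)^2 * w x + w x) / 2)" using fi wi by auto
    show "(\<lambda>x. f x * w x) \<in> borel_measurable lborel" by measurable
    show "AE x in lborel. norm (f x * w x) \<le> norm (((f x)^2 * w x + w x) / 2)"
    proof (intro AE_I2)
      fix x
      have "0 \<le> (\<bar>f x\<bar> - 1)^2 * w x" using wn by simp
      then have "\<bar>f x\<bar> * w x \<le> ((f x)^2 * w x + w x) / 2"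
        by (simp add: power2_eq_square algebra_simps)
      then show "norm (f x * w x) \<le> norm (((f x)^2 * w x + w x) / 2)"
        using wn[of x] by (simp add: abs_mult)
    qed
  qed
  define W where "W = (LINT x|lborel. w x)"
  define P where "P = (LINT x|lborel. f x * w x)"
  define Q where "Q = (LINT x|lborel. (f x)^2 * w x)"
  have W0: "W \<ge> 0" unfolding W_def by (simp add: wn)
  show "P^2 \<le> W * Q" unfolding P_def[symmetric] W_def[symmetric] Q_def[symmetric]
  proof (cases "W = 0")
    case True
    then have "AE x in lborel. w x = 0"
      using wi by (subst integral_nonneg_eq_0_iff_AE[symmetric]) (auto simp: W_def wn)
    then have "P = 0" unfolding P_def by (subst integral_eq_zero_AE) auto
    then show ?thesis using True by simp
  next
    case False
    with W0 have Wp: "W > 0" by simp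
    define c where "c = P / W"
    have "0 \<le> (LINT x|lborel. (f x - c)^2 * w x)" by (simp add: wn)
    also have "(LINT x|lborel. (f x - c)^2 * w x) = (LINT x|lborel. (f x)^2 * w x - 2*c * (f x * w x) + c^2 * w x)"
      by (rule Bochner_Integration.integral_cong) (auto simp: power2_eq_square algebra_simps)
    also have "\<dots> = Q - 2*c*P + c^2 * W"
      using fi fwi wi by (simp add: Q_def P_def W_def)
    also have "\<dots> = Q - P^2 / W" using Wp by (simp add: c_def field_simps power2_eq_square)
    finally show ?thesis using Wp by (simp add: field_simps)
  qed
qed

subsection \<open>Uniqueness of the Fourier transform\<close>

lemma integrable_fourier_kernel:
  fixes w :: "real \<Rightarrow> complex"
  assumes "integrable lborel w"
  shows "integrable lborel (\<lambda>y. exp (- (\<i> * of_real (t*y))) * w y)"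
  by (rule Bochner_Integration.integrable_bound[OF integrable_norm[OF assms]])
     (use assms in \<open>auto simp: norm_mult\<close>)

lemma density_real_distribution:
  fixes p :: "real \<Rightarrow> real"
  assumes [measurable]: "p \<in> borel_measurable borel" and nn: "\<And>y. p y \<ge> 0"
    and int: "integrable lborel p" and one: "(LINT y|lborel. p y) = 1"
  shows "real_distribution (density lborel (\<lambda>y. ennreal (p y)))"
proof -
  have "emeasure (density lborel (\<lambda>y. ennreal (p y))) UNIV = (\<integral>\<^sup>+y. ennreal (p y) \<partial>lborel)"
    by (subst emeasure_density) auto
  also have "\<dots> = ennreal (LINT y|lborel. p y)"
    by (rule nn_integral_eq_integral[OF int]) (simp add: nn)
  finally have "emeasure (density lborel (\<lambda>y. ennreal (p y))) UNIV = 1" using one by simp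
  then have "prob_space (density lborel (\<lambda>y. ennreal (p y)))"
    by (intro prob_spaceI) simp
  then show ?thesis
    by (simp add: real_distribution_def real_distribution_axioms_def)
qed

lemma char_density:
  fixes p :: "real \<Rightarrow> real"
  assumes [measurable]: "p \<in> borel_measurable borel" and nn: "\<And>y. p y \<ge> 0"
  shows "char (density lborel (\<lambda>y. ennreal (p y))) t = (CLINT y|lborel. p y *\<^sub>R iexp (t*y))"
  unfolding char_def by (subst integral_density) (auto simp: nn)

text \<open>Two nonnegative integrable functions with the same Fourier transform agree a.e.: after
  normalisation they are densities of probability distributions with equal characteristic
  functions, which coincide by Levy's uniqueness theorem.\<close>
lemma fourier_unique_nonneg:
  fixes p n :: "real \<Rightarrow> real"
  assumes pint: "integrable lborel p" and nint: "integrable lborel n"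
    and pnn: "\<And>y. p y \<ge> 0" and nnn: "\<And>y. n y \<ge> 0"
    and eq: "\<And>t. (CLINT y|lborel. p y *\<^sub>R iexp (t*y)) = (CLINT y|lborel. n y *\<^sub>R iexp (t*y))"
  shows "AE y in lborel. p y = n y"
proof -
  have [measurable]: "p \<in> borel_measurable borel" "n \<in> borel_measurable borel" using pint nint by auto
  define m where "m = (LINT y|lborel. p y)"
  have mn: "m = (LINT y|lborel. n y)"
  proof -
    have "complex_of_real m = complex_of_real (LINT y|lborel. n y)"
      using eq[of 0] unfolding m_def by (simp add: scaleR_conv_of_real)
    then show ?thesis by simp
  qed
  have m0: "m \<ge> 0" unfolding m_def by (simp add: pnn)
  show ?thesis
  proof (cases "m = 0")
    case True
    have "AE y in lborel. p y = 0"
      using True pint by (subst integral_nonneg_eq_0_iff_AE[symmetric]) (auto simp: m_def pnn)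
    moreover have "AE y in lborel. n y = 0"
      using True nint mn by (subst integral_nonneg_eq_0_iff_AE[symmetric]) (auto simp: nnn)
    ultimately show ?thesis by eventually_elim simp
  next
    case False
    with m0 have mpos: "m > 0" by simp
    let ?M1 = "density lborel (\<lambda>y. ennreal (p y / m))"
    let ?M2 = "density lborel (\<lambda>y. ennreal (n y / m))"
    have d1: "real_distribution ?M1"
      by (rule density_real_distribution) (use mpos pint in \<open>auto simp: pnn m_def\<close>)
    have d2: "real_distribution ?M2"
      by (rule density_real_distribution) (use mpos nint mn in \<open>auto simp: nnn\<close>)
    have "char ?M1 = char ?M2"
    proof
      fix t
      have "char ?M1 t = (CLINT y|lborel. (p y / m) *\<^sub>R iexp (t*y))"
        by (rule char_density) (use mpos in \<open>auto simp: pnn\<close>)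
      also have "\<dots> = (1/m) *\<^sub>R (CLINT y|lborel. p y *\<^sub>R iexp (t*y))"
        by (simp add: divide_inverse mult.commute flip: scaleR_scaleR)
      also have "\<dots> = (1/m) *\<^sub>R (CLINT y|lborel. n y *\<^sub>R iexp (t*y))" by (simp only: eq)
      also have "\<dots> = (CLINT y|lborel. (n y / m) *\<^sub>R iexp (t*y))"
        by (simp add: divide_inverse mult.commute flip: scaleR_scaleR)
      also have "\<dots> = char ?M2 t"
        by (rule char_density[symmetric]) (use mpos in \<open>auto simp: nnn\<close>)
      finally show "char ?M1 t = char ?M2 t" .
    qed
    then have "?M1 = ?M2" using Levy_uniqueness d1 d2 by blast
    then have "AE y in lborel. ennreal (p y / m) = ennreal (n y / m)"
      by (subst (asm) sigma_finite_measure.density_unique_iff[OF sigma_finite_lborel]) auto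
    then show ?thesis
      by eventually_elim (use mpos in \<open>auto simp: pnn nnn ennreal_inj divide_cancel_right\<close>)
  qed
qed

text \<open>A real integrable function with vanishing Fourier transform vanishes a.e.: apply the
  previous lemma to its positive and negative parts.\<close>
lemma fourier_unique_real:
  fixes r :: "real \<Rightarrow> real"
  assumes int: "integrable lborel r"
    and z: "\<And>t. (CLINT y|lborel. r y *\<^sub>R iexp (t*y)) = 0"
  shows "AE y in lborel. r y = 0"
proof -
  have [measurable]: "r \<in> borel_measurable borel" using int by auto
  define p where "p y = max (r y) 0" for y
  define n where "n y = max (- r y) 0" for y
  have [measurable]: "p \<in> borel_measurable borel" "n \<in> borel_measurable borel"
    unfolding p_def n_def by measurable
  have pint: "integrable lborel p" unfolding p_def using int by (intro integrable_max) auto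
  have nint: "integrable lborel n" unfolding n_def using int by (intro integrable_max) auto
  have pnn: "p y \<ge> 0" "n y \<ge> 0" for y by (auto simp: p_def n_def)
  have ipint: "integrable lborel (\<lambda>y. p y *\<^sub>R iexp (t*y))" for t
    by (rule Bochner_Integration.integrable_bound[OF pint]) (auto simp: pnn)
  have inint: "integrable lborel (\<lambda>y. n y *\<^sub>R iexp (t*y))" for t
    by (rule Bochner_Integration.integrable_bound[OF nint]) (auto simp: pnn)
  have "(CLINT y|lborel. p y *\<^sub>R iexp (t*y)) = (CLINT y|lborel. n y *\<^sub>R iexp (t*y))" for t
  proof -
    have "r y = p y - n y" for y by (auto simp: p_def n_def)
    then have "(CLINT y|lborel. p y *\<^sub>R iexp (t*y)) - (CLINT y|lborel. n y *\<^sub>R iexp (t*y))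
        = (CLINT y|lborel. r y *\<^sub>R iexp (t*y))"
      by (subst Bochner_Integration.integral_diff[OF ipint inint, symmetric]) (simp add: scaleR_diff_left)
    then show ?thesis using z[of t] by simp
  qed
  then have "AE y in lborel. p y = n y"
    by (rule fourier_unique_nonneg[OF pint nint pnn])
  then show ?thesis by eventually_elim (auto simp: p_def n_def)
qed

text \<open>The complex case reduces to real and imaginary parts, whose transforms are combinations
  of the transform of w at t and -t.\<close>
lemma fourier_unique_L1:
  fixes w :: "real \<Rightarrow> complex"
  assumes int: "integrable lborel w"
    and z: "\<And>t. (LINT y|lborel. exp (- (\<i> * of_real (t*y))) * w y) = 0"
  shows "AE y in lborel. w y = 0"
proof -
  let ?E = "\<lambda>t y. exp (- (\<i> * of_real (t*y))) * w y"
  have Ei: "integrable lborel (?E t)" for t by (rule integrable_fourier_kernel[OF int])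
  have cE: "cnj (?E t y) = iexp (t*y) * cnj (w y)" for t y
    by (simp add: exp_cnj)
  have mE: "?E (-t) y = iexp (t*y) * w y" for t y by simp
  have re: "AE y in lborel. Re (w y) = 0"
  proof (rule fourier_unique_real)
    show "integrable lborel (\<lambda>y. Re (w y))" using int by auto
    fix t
    have X: "Re (w y) *\<^sub>R iexp (t*y) = (?E (-t) y + cnj (?E t y)) / 2" for y
    proof -
      have "Re (w y) *\<^sub>R iexp (t*y) = iexp (t*y) * (w y + cnj (w y)) / 2"
        by (simp add: complex_add_cnj scaleR_conv_of_real)
      also have "\<dots> = (?E (-t) y + cnj (?E t y)) / 2" unfolding cE mE by (simp add: algebra_simps)
      finally show ?thesis .
    qed
    have "(CLINT y|lborel. Re (w y) *\<^sub>R iexp (t*y)) = (CLINT y|lborel. (?E (-t) y + cnj (?E t y)) / 2)"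
      by (rule Bochner_Integration.integral_cong[OF refl X])
    also have "\<dots> = ((CLINT y|lborel. ?E (-t) y) + cnj (CLINT y|lborel. ?E t y)) / 2"
      by (simp only: integral_divide_zero Bochner_Integration.integral_add[OF Ei integrable_cnj[OF Ei]])
         (subst Bochner_Integration.integral_cnj, rule refl)
    also have "\<dots> = 0" using z[of t] z[of "-t"] by simp
    finally show "(CLINT y|lborel. Re (w y) *\<^sub>R iexp (t*y)) = 0" .
  qed
  have im: "AE y in lborel. Im (w y) = 0"
  proof (rule fourier_unique_real)
    show "integrable lborel (\<lambda>y. Im (w y))" using int by auto
    fix t
    have X: "Im (w y) *\<^sub>R iexp (t*y) = (?E (-t) y - cnj (?E t y)) / (2*\<i>)" for y
    proof -
      have "Im (w y) *\<^sub>R iexp (t*y) = iexp (t*y) * (w y - cnj (w y)) / (2*\<i>)"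
        by (simp add: complex_diff_cnj scaleR_conv_of_real field_simps)
      also have "\<dots> = (?E (-t) y - cnj (?E t y)) / (2*\<i>)" unfolding cE mE by (simp add: algebra_simps)
      finally show ?thesis .
    qed
    have "(CLINT y|lborel. Im (w y) *\<^sub>R iexp (t*y)) = (CLINT y|lborel. (?E (-t) y - cnj (?E t y)) / (2*\<i>))"
      by (rule Bochner_Integration.integral_cong[OF refl X])
    also have "\<dots> = ((CLINT y|lborel. ?E (-t) y) - cnj (CLINT y|lborel. ?E t y)) / (2*\<i>)"
      by (simp only: integral_divide_zero Bochner_Integration.integral_diff[OF Ei integrable_cnj[OF Ei]])
         (subst Bochner_Integration.integral_cnj, rule refl)
    also have "\<dots> = 0" using z[of t] z[of "-t"] by simp
    finally show "(CLINT y|lborel. Im (w y) *\<^sub>R iexp (t*y)) = 0" .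
  qed
  from re im show ?thesis by eventually_elim (simp add: complex_eq_iff)
qed

lemma fourier_L2_gaussian_pairing:
  assumes F: "is_fourier_L2 h g" and a: "a > 0"
  shows "(LINT k|lborel. g k * (exp (- (\<i> * of_real (xi * k))) * of_real (exp (- a * (k - t)^2))))
       = (LINT y|lborel. h y * (exp (- (\<i> * of_real ((y + xi) * t))) * of_real (sqrt (pi / a) * exp (- ((y + xi)^2) / (4 * a)))))"
proof -
  let ?\<phi> = "\<lambda>k. exp (- (\<i> * of_real (xi * k))) * of_real (exp (- a * (k - t)^2))"
  have \<phi>_int: "integrable lborel ?\<phi>"
    using integrable_fourier_kernel[OF integrable_of_real[OF integrable_gaussian[OF a, of t]]] .
  have \<phi>_hat: "fourier_L1 ?\<phi> y
       = exp (- (\<i> * of_real ((y + xi) * t))) * of_real (sqrt (pi / a) * exp (- ((y + xi)^2) / (4 * a)))" for y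
  proof -
    have "fourier_L1 ?\<phi> y = (LINT k|lborel. exp (- (\<i> * of_real ((y + xi) * k))) * of_real (exp (- a * (k - t)^2)))"
      unfolding fourier_L1_def
      by (rule Bochner_Integration.integral_cong) (auto simp: algebra_simps exp_add[symmetric])
    then show ?thesis by (simp only: fourier_gaussian[OF a])
  qed
  have "(LINT k|lborel. g k * ?\<phi> k) = (LINT y|lborel. h y * fourier_L1 ?\<phi> y)"
    using F \<phi>_int sq_integrable_modulated_gaussian[OF a] unfolding is_fourier_L2_def by blast
  then show ?thesis by (simp only: \<phi>_hat)
qed

text \<open>An L^2 function whose transform vanishes is zero: testing against shifted Gaussians shows
  that the L^1 function h times a Gaussian has vanishing Fourier transform.\<close>
lemma fourier_L2_zero:
  assumes F: "is_fourier_L2 h g" and z: "AE k in lborel. g k = 0"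
  shows "AE y in lborel. h y = 0"
proof -
  define w where "w y = h y * complex_of_real (sqrt pi * exp (- (y^2) / 4))" for y
  have hs: "sq_integrable h" using F unfolding is_fourier_L2_def by blast
  have wi: "integrable lborel w"
    unfolding w_def using sq_integrable_product_integrable[OF hs sq_integrable_gaussian[of 4 "sqrt pi" 0]]
    by simp
  have "AE y in lborel. w y = 0"
  proof (rule fourier_unique_L1[OF wi])
    fix t
    have "0 = (LINT k|lborel. g k * (exp (- (\<i> * of_real (0 * k))) * of_real (exp (- 1 * (k - t)^2))))"
      using z by (subst integral_eq_zero_AE) auto
    also have "\<dots> = (LINT y|lborel. h y * (exp (- (\<i> * of_real ((y + 0) * t))) * of_real (sqrt (pi / 1) * exp (- ((y + 0)^2) / (4 * 1)))))"
      by (rule fourier_L2_gaussian_pairing[OF F]) simp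
    also have "\<dots> = (LINT y|lborel. exp (- (\<i> * of_real (t*y))) * w y)"
      by (rule Bochner_Integration.integral_cong) (auto simp: w_def mult.commute mult.left_commute)
    finally show "(LINT y|lborel. exp (- (\<i> * of_real (t*y))) * w y) = 0" by simp
  qed
  then show ?thesis by eventually_elim (simp add: w_def)
qed

subsection \<open>Gaussian damping and the heat semigroup\<close>

lemma borel_measurable_cnj [measurable]:
  "f \<in> borel_measurable M \<Longrightarrow> (\<lambda>x. cnj (f x)) \<in> borel_measurable M"
  by (rule borel_measurable_continuous_on[where f=cnj]) (auto intro: continuous_intros)

definition heat_conv :: "real \<Rightarrow> (real \<Rightarrow> complex) \<Rightarrow> real \<Rightarrow> complex" where
  "heat_conv e v s = (LINT x|lborel. v x * of_real (exp (- ((x - s)^2) / (2*e))))"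

definition heat_conv_abs :: "real \<Rightarrow> (real \<Rightarrow> complex) \<Rightarrow> real \<Rightarrow> real" where
  "heat_conv_abs e v s = (LINT x|lborel. cmod (v x) * exp (- ((x - s)^2) / (2*e)))"

lemma heat_conv_measurable [measurable]:
  assumes "v \<in> borel_measurable borel" shows "heat_conv e v \<in> borel_measurable borel"
proof -
  have [measurable]: "v \<in> borel_measurable lborel" using assms by simp
  have "heat_conv e v \<in> borel_measurable lborel"
    unfolding heat_conv_def[abs_def] by measurable
  then show ?thesis by simp
qed

lemma heat_conv_abs_measurable [measurable]:
  assumes "v \<in> borel_measurable borel" shows "heat_conv_abs e v \<in> borel_measurable borel"
proof -
  have [measurable]: "v \<in> borel_measurable lborel" using assms by simp
  have "heat_conv_abs e v \<in> borel_measurable lborel"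
    unfolding heat_conv_abs_def[abs_def] by measurable
  then show ?thesis by simp
qed

lemma norm_heat_conv_le: "cmod (heat_conv e v s) \<le> heat_conv_abs e v s"
  unfolding heat_conv_def heat_conv_abs_def
  by (rule order.trans[OF integral_norm_bound]) (simp add: norm_mult)

lemma fourier_damped_inverse:
  assumes F: "is_fourier_L2 v V" and e: "e > 0"
  shows "(LINT k|lborel. V k * (exp (\<i> * of_real (s * k)) * of_real (exp (- e * k^2))))
       = of_real (sqrt (pi / e)) * heat_conv (2*e) v s"
proof -
  have "(LINT k|lborel. V k * (exp (\<i> * of_real (s * k)) * of_real (exp (- e * k^2))))
     = (LINT k|lborel. V k * (exp (- (\<i> * of_real ((-s) * k))) * of_real (exp (- e * (k - 0)^2))))"
    by simp
  also have "\<dots> = (LINT y|lborel. v y * (exp (- (\<i> * of_real ((y + -s) * 0))) * of_real (sqrt (pi / e) * exp (- ((y + -s)^2) / (4 * e)))))"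
    by (rule fourier_L2_gaussian_pairing[OF F e])
  also have "\<dots> = (LINT y|lborel. of_real (sqrt (pi / e)) * (v y * of_real (exp (- ((y - s)^2) / (2*(2*e))))))"
    by (rule Bochner_Integration.integral_cong) (auto simp: mult_ac)
  also have "\<dots> = of_real (sqrt (pi / e)) * heat_conv (2*e) v s"
    unfolding heat_conv_def by (rule integral_mult_right_zero)
  finally show ?thesis .
qed

lemma damped_conjugate_test_function:
  assumes Vs: "sq_integrable V" and e: "e > 0"
  shows "integrable lborel (\<lambda>k. cnj (V k) * of_real (exp (- e * k^2)))"
    and "sq_integrable (\<lambda>k. cnj (V k) * of_real (exp (- e * k^2)))"
proof -
  have [measurable]: "V \<in> borel_measurable borel" using sq_integrable_measurable[OF Vs] .
  have gs: "sq_integrable (\<lambda>k. complex_of_real (exp (- e * k^2)))"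
    using sq_integrable_modulated_gaussian[OF e, of 0 0] by simp
  have cVs: "sq_integrable (\<lambda>k. cnj (V k))"
    by (rule sq_integrable_bound[OF Vs]) (use Vs in \<open>auto simp: sq_integrable_def\<close>)
  show "integrable lborel (\<lambda>k. cnj (V k) * of_real (exp (- e * k^2)))"
    by (rule sq_integrable_product_integrable[OF cVs gs])
  show "sq_integrable (\<lambda>k. cnj (V k) * of_real (exp (- e * k^2)))"
  proof (rule sq_integrable_bound[OF Vs])
    show "(\<lambda>x. cnj (V x) * complex_of_real (exp (- e * x\<^sup>2))) \<in> borel_measurable lborel"
      by measurable
    fix x
    have "exp (- e * x\<^sup>2) \<le> 1" using e by simp
    then show "cmod (cnj (V x) * complex_of_real (exp (- e * x\<^sup>2))) \<le> cmod (V x)"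
      by (simp add: norm_mult mult_left_le)
  qed
qed

lemma damped_energy_duality:
  assumes F: "is_fourier_L2 v V" and e: "e > 0"
  shows "complex_of_real (LINT k|lborel. (cmod (V k))^2 * exp (- e * k^2))
       = of_real (sqrt (pi / e)) * (LINT x|lborel. v x * cnj (heat_conv (2*e) v x))"
proof -
  have Vs: "sq_integrable V" using F unfolding is_fourier_L2_def by auto
  define \<phi> where "\<phi> k = cnj (V k) * of_real (exp (- e * k^2))" for k
  have \<phi>i: "integrable lborel \<phi>" and \<phi>s: "sq_integrable \<phi>"
    unfolding \<phi>_def by (rule damped_conjugate_test_function[OF Vs e])+
  have dual: "(LINT k|lborel. V k * \<phi> k) = (LINT x|lborel. v x * fourier_L1 \<phi> x)"
    using F \<phi>i \<phi>s unfolding is_fourier_L2_def by blast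
  have lhs: "(LINT k|lborel. V k * \<phi> k) = complex_of_real (LINT k|lborel. (cmod (V k))^2 * exp (- e * k^2))"
  proof -
    have "(LINT k|lborel. V k * \<phi> k) = (LINT k|lborel. complex_of_real ((cmod (V k))^2 * exp (- e * k^2)))"
    proof (rule Bochner_Integration.integral_cong[OF refl])
      fix k
      have "V k * cnj (V k) = complex_of_real ((cmod (V k))^2)"
        by (rule complex_norm_square[symmetric])
      then show "V k * \<phi> k = complex_of_real ((cmod (V k))^2 * exp (- e * k^2))"
        unfolding \<phi>_def by (simp add: mult.assoc[symmetric])
    qed
    then show ?thesis by (simp only: integral_complex_of_real)
  qed
  have \<phi>_hat: "fourier_L1 \<phi> x = cnj (of_real (sqrt (pi / e)) * heat_conv (2*e) v x)" for x
  proof -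
    have "fourier_L1 \<phi> x = (LINT k|lborel. cnj (V k * (exp (\<i> * of_real (x * k)) * of_real (exp (- e * k^2)))))"
      unfolding fourier_L1_def \<phi>_def
      by (rule Bochner_Integration.integral_cong) (auto simp: exp_cnj mult_ac)
    also have "\<dots> = cnj (LINT k|lborel. V k * (exp (\<i> * of_real (x * k)) * of_real (exp (- e * k^2))))"
      by (rule Bochner_Integration.integral_cnj)
    also have "\<dots> = cnj (of_real (sqrt (pi / e)) * heat_conv (2*e) v x)"
      by (simp only: fourier_damped_inverse[OF F e])
    finally show ?thesis .
  qed
  have "complex_of_real (LINT k|lborel. (cmod (V k))^2 * exp (- e * k^2)) = (LINT x|lborel. v x * fourier_L1 \<phi> x)"
    using lhs dual by simp
  also have "\<dots> = (LINT x|lborel. of_real (sqrt (pi / e)) * (v x * cnj (heat_conv (2*e) v x)))"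
    by (rule Bochner_Integration.integral_cong) (auto simp: \<phi>_hat mult_ac)
  also have "\<dots> = of_real (sqrt (pi / e)) * (LINT x|lborel. v x * cnj (heat_conv (2*e) v x))"
    by (rule integral_mult_right_zero)
  finally show ?thesis .
qed

text \<open>The majorant of a heat convolution is square integrable, by Cauchy-Schwarz against the
  kernel and Tonelli.\<close>
lemma heat_conv_abs_sq_integrable:
  assumes vs: "sq_integrable v" and e: "e > 0"
  shows "integrable lborel (\<lambda>s. (heat_conv_abs e v s)^2)"
proof -
  have [measurable]: "v \<in> borel_measurable borel" using sq_integrable_measurable[OF vs] .
  have vi: "integrable lborel (\<lambda>x. (cmod (v x))^2)" using vs unfolding sq_integrable_def by simp
  let ?f = "\<lambda>(x::real, s::real). (cmod (v x))^2 * exp (- ((x - s)^2) / (2*e))"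
  have f_int: "integrable (lborel \<Otimes>\<^sub>M lborel) ?f"
  proof (rule lborel_pair.Fubini_integrable)
    show "?f \<in> borel_measurable (lborel \<Otimes>\<^sub>M lborel)" by measurable
    have "(\<lambda>x. LINT s|lborel. norm (?f (x, s))) = (\<lambda>x. sqrt (2*pi*e) * (cmod (v x))^2)"
      using heat_kernel_integral(4)[OF e] by (simp add: mult.commute)
    then show "integrable lborel (\<lambda>x. LINT s|lborel. norm (?f (x, s)))"
      using vi by simp
    show "AE x in lborel. integrable lborel (\<lambda>s. ?f (x, s))"
      using heat_kernel_integral(3)[OF e] by simp
  qed
  have "integrable (lborel \<Otimes>\<^sub>M lborel) (\<lambda>(s, x). ?f (x, s))"
    using lborel_pair.integrable_product_swap[OF f_int] by simp
  from lborel_pair.integrable_fst'[OF this]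
  have energy_int: "integrable lborel (\<lambda>s. LINT x|lborel. (cmod (v x))^2 * exp (- ((x - s)^2) / (2*e)))"
    by simp
  have cs: "(heat_conv_abs e v s)^2 \<le> sqrt (2*pi*e) * (LINT x|lborel. (cmod (v x))^2 * exp (- ((x - s)^2) / (2*e)))" for s
  proof -
    have "(heat_conv_abs e v s)^2 \<le> (LINT x|lborel. exp (- ((x - s)^2) / (2*e))) * (LINT x|lborel. (cmod (v x))^2 * exp (- ((x - s)^2) / (2*e)))"
      unfolding heat_conv_abs_def
    proof (rule weighted_cauchy_schwarz(2))
      show "integrable lborel (\<lambda>x. (cmod (v x))\<^sup>2 * exp (- (x - s)\<^sup>2 / (2 * e)))"
      proof (rule Bochner_Integration.integrable_bound[OF vi])
        show "AE x in lborel. norm ((cmod (v x))\<^sup>2 * exp (- (x - s)\<^sup>2 / (2 * e))) \<le> norm ((cmod (v x))\<^sup>2)"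
        proof (intro AE_I2)
          fix x have "exp (- (x - s)\<^sup>2 / (2 * e)) \<le> 1" using e by simp
          then show "norm ((cmod (v x))\<^sup>2 * exp (- (x - s)\<^sup>2 / (2 * e))) \<le> norm ((cmod (v x))\<^sup>2)"
            by (simp add: mult_left_le)
        qed
      qed measurable
    qed (use heat_kernel_integral(1)[OF e] in auto)
    then show ?thesis using heat_kernel_integral(2)[OF e] by simp
  qed
  show ?thesis
  proof (rule Bochner_Integration.integrable_bound[OF integrable_mult_right[OF energy_int, of "sqrt (2*pi*e)"]])
    show "(\<lambda>s. (heat_conv_abs e v s)\<^sup>2) \<in> borel_measurable lborel" by measurable
    show "AE s in lborel. norm ((heat_conv_abs e v s)\<^sup>2) \<le> norm (sqrt (2*pi*e) * (LINT x|lborel. (cmod (v x))^2 * exp (- ((x - s)^2) / (2*e))))"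
      using cs by (auto intro: order.trans[OF _ abs_ge_self])
  qed
qed

lemma heat_conv_sq_integrable:
  assumes vs: "sq_integrable v" and e: "e > 0"
  shows "integrable lborel (\<lambda>s. (cmod (heat_conv e v s))^2)"
proof (rule Bochner_Integration.integrable_bound[OF heat_conv_abs_sq_integrable[OF vs e]])
  have [measurable]: "v \<in> borel_measurable borel" using sq_integrable_measurable[OF vs] .
  show "(\<lambda>s. (cmod (heat_conv e v s))\<^sup>2) \<in> borel_measurable lborel" by measurable
  show "AE s in lborel. norm ((cmod (heat_conv e v s))\<^sup>2) \<le> norm ((heat_conv_abs e v s)\<^sup>2)"
    using norm_heat_conv_le[of e v] by (auto intro!: power_mono)
qed

lemma heat_semigroup:
  assumes vs: "sq_integrable v" and e: "e > 0"
  shows "(LINT s|lborel. of_real (exp (- ((x - s)^2) / (2*e))) * heat_conv e v s)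
       = of_real (sqrt (pi*e)) * heat_conv (2*e) v x"
proof -
  have [measurable]: "v \<in> borel_measurable borel" using sq_integrable_measurable[OF vs] .
  let ?g = "\<lambda>a b. exp (- ((a - b)^2) / (2*e))"
  let ?h = "\<lambda>y. v y * of_real (sqrt (pi*e) * exp (- ((y - x)^2) / (4*e)))"
  let ?f = "\<lambda>(y::real, s::real). of_real (?g x s) * (v y * of_real (?g y s)) :: complex"
  have inner: "(LINT s|lborel. ?f (y, s)) = ?h y" for y
  proof -
    have "(LINT s|lborel. ?f (y, s)) = (LINT s|lborel. v y * of_real (?g x s * ?g y s))"
      by (rule Bochner_Integration.integral_cong) (auto simp: mult_ac)
    also have "\<dots> = v y * of_real (LINT s|lborel. ?g x s * ?g y s)"
      by (simp only: integral_mult_right_zero integral_complex_of_real)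
    finally show ?thesis by (simp only: heat_kernel_product(2)[OF e])
  qed
  have f_int: "integrable (lborel \<Otimes>\<^sub>M lborel) ?f"
  proof (rule lborel_pair.Fubini_integrable)
    show "?f \<in> borel_measurable (lborel \<Otimes>\<^sub>M lborel)" by measurable
    have "(LINT s|lborel. norm (?f (y, s))) = cmod (?h y)" for y
    proof -
      have "(LINT s|lborel. norm (?f (y, s))) = (LINT s|lborel. cmod (v y) * (?g x s * ?g y s))"
        by (rule Bochner_Integration.integral_cong) (auto simp: norm_mult)
      then show ?thesis using heat_kernel_product(2)[OF e, of x y] e by (simp add: norm_mult)
    qed
    moreover have "integrable lborel ?h"
      using integrable_mult_right[OF integrable_gaussian_weighted[OF vs, of "4*e" x], of "of_real (sqrt (pi * e))"] e
      by (simp add: mult_ac)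
    ultimately show "integrable lborel (\<lambda>y. LINT s|lborel. norm (?f (y, s)))" by simp
    show "AE y in lborel. integrable lborel (\<lambda>s. ?f (y, s))"
    proof (intro AE_I2)
      fix y
      have "integrable lborel (\<lambda>s. complex_of_real (?g x s * ?g y s) * v y)"
        using heat_kernel_product(1)[OF e, of x y] by (intro integrable_mult_left integrable_of_real)
      then show "integrable lborel (\<lambda>s. ?f (y, s))" by (simp add: mult_ac)
    qed
  qed
  have "(LINT s|lborel. of_real (?g x s) * heat_conv e v s) = (LINT s|lborel. LINT y|lborel. ?f (y, s))"
    unfolding heat_conv_def by (simp add: integral_mult_right_zero)
  also have "\<dots> = (LINT y|lborel. LINT s|lborel. ?f (y, s))"
    using lborel_pair.Fubini_integral[of "\<lambda>y s. ?f (y, s)"] f_int by simp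
  also have "\<dots> = (LINT y|lborel. of_real (sqrt (pi*e)) * (v y * of_real (exp (- ((y - x)^2) / (2*(2*e))))))"
    unfolding inner by (rule Bochner_Integration.integral_cong) (auto simp: mult_ac)
  also have "\<dots> = of_real (sqrt (pi*e)) * heat_conv (2*e) v x"
    unfolding heat_conv_def by (rule integral_mult_right_zero)
  finally show ?thesis .
qed

text \<open>The L^2 energy of the heat convolution, computed by Fubini and the semigroup property.\<close>
lemma heat_conv_energy:
  assumes vs: "sq_integrable v" and e: "e > 0"
  shows "complex_of_real (LINT s|lborel. (cmod (heat_conv e v s))^2)
       = of_real (sqrt (pi*e)) * (LINT x|lborel. v x * cnj (heat_conv (2*e) v x))"
proof -
  have [measurable]: "v \<in> borel_measurable borel" using sq_integrable_measurable[OF vs] .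
  let ?g = "\<lambda>a b. exp (- ((a - b)^2) / (2*e))"
  let ?F = "\<lambda>(s::real, x::real). v x * of_real (?g x s) * cnj (heat_conv e v s)"
  have F_int: "integrable (lborel \<Otimes>\<^sub>M lborel) ?F"
  proof (rule lborel_pair.Fubini_integrable)
    show "?F \<in> borel_measurable (lborel \<Otimes>\<^sub>M lborel)" by measurable
    have eq: "(LINT x|lborel. norm (?F (s, x))) = cmod (heat_conv e v s) * heat_conv_abs e v s" for s
    proof -
      have "(LINT x|lborel. norm (?F (s, x))) = (LINT x|lborel. cmod (heat_conv e v s) * (cmod (v x) * ?g x s))"
        by (rule Bochner_Integration.integral_cong) (auto simp: norm_mult)
      then show ?thesis unfolding heat_conv_abs_def by simp
    qed
    show "integrable lborel (\<lambda>s. LINT x|lborel. norm (?F (s, x)))"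
      unfolding eq
    proof (rule Bochner_Integration.integrable_bound[OF heat_conv_abs_sq_integrable[OF vs e]])
      show "(\<lambda>s. cmod (heat_conv e v s) * heat_conv_abs e v s) \<in> borel_measurable lborel" by measurable
      show "AE s in lborel. norm (cmod (heat_conv e v s) * heat_conv_abs e v s) \<le> norm ((heat_conv_abs e v s)\<^sup>2)"
      proof (intro AE_I2)
        fix s
        have "0 \<le> heat_conv_abs e v s" unfolding heat_conv_abs_def by simp
        then show "norm (cmod (heat_conv e v s) * heat_conv_abs e v s) \<le> norm ((heat_conv_abs e v s)\<^sup>2)"
          using norm_heat_conv_le[of e v s]
          by (simp add: power2_eq_square abs_mult mult_right_mono)
      qed
    qed
    show "AE s in lborel. integrable lborel (\<lambda>x. ?F (s, x))"
      using integrable_gaussian_weighted[OF vs, of "2*e"] e by (auto intro!: integrable_mult_left)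
  qed
  have inner_x: "(LINT x|lborel. ?F (s, x)) = complex_of_real ((cmod (heat_conv e v s))^2)" for s
  proof -
    have "(LINT x|lborel. ?F (s, x)) = heat_conv e v s * cnj (heat_conv e v s)"
      unfolding heat_conv_def by (simp add: integral_mult_left_zero)
    then show ?thesis by (simp only: complex_norm_square)
  qed
  have inner_s: "(LINT s|lborel. ?F (s, x)) = of_real (sqrt (pi*e)) * (v x * cnj (heat_conv (2*e) v x))" for x
  proof -
    have "(LINT s|lborel. ?F (s, x)) = (LINT s|lborel. v x * cnj (of_real (?g x s) * heat_conv e v s))"
      by (rule Bochner_Integration.integral_cong) (auto simp: mult_ac)
    also have "\<dots> = v x * cnj (LINT s|lborel. of_real (?g x s) * heat_conv e v s)"
      by (simp only: integral_mult_right_zero Bochner_Integration.integral_cnj)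
    also have "\<dots> = v x * cnj (of_real (sqrt (pi*e)) * heat_conv (2*e) v x)"
      by (simp only: heat_semigroup[OF vs e])
    finally show ?thesis by simp
  qed
  have "(LINT x|lborel. LINT s|lborel. ?F (s, x)) = (LINT s|lborel. LINT x|lborel. ?F (s, x))"
    using lborel_pair.Fubini_integral[of "\<lambda>s x. ?F (s, x)"] F_int by simp
  then have "(LINT s|lborel. complex_of_real ((cmod (heat_conv e v s))^2))
           = (LINT x|lborel. of_real (sqrt (pi*e)) * (v x * cnj (heat_conv (2*e) v x)))"
    unfolding inner_x inner_s by simp
  then show ?thesis by (simp only: integral_complex_of_real integral_mult_right_zero)
qed

lemma damped_plancherel:
  assumes F: "is_fourier_L2 v V" and e: "e > 0"
  shows "(LINT k|lborel. (cmod (V k))^2 * exp (- e * k^2)) = (1/e) * (LINT s|lborel. (cmod (heat_conv e v s))^2)"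
proof -
  have vs: "sq_integrable v" using F unfolding is_fourier_L2_def by auto
  define E where "E = (LINT s|lborel. (cmod (heat_conv e v s))^2)"
  have "complex_of_real (LINT k|lborel. (cmod (V k))^2 * exp (- e * k^2))
      = of_real (sqrt (pi / e)) * (LINT x|lborel. v x * cnj (heat_conv (2*e) v x))"
    by (rule damped_energy_duality[OF F e])
  also have "(LINT x|lborel. v x * cnj (heat_conv (2*e) v x)) = complex_of_real E / of_real (sqrt (pi*e))"
    using heat_conv_energy[OF vs e] e unfolding E_def by (simp add: field_simps)
  also have "of_real (sqrt (pi / e)) * (complex_of_real E / of_real (sqrt (pi*e)))
           = complex_of_real (sqrt (pi / e) / sqrt (pi * e) * E)" by simp
  also have "sqrt (pi / e) / sqrt (pi * e) = 1 / e" using e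
    by (simp add: real_sqrt_divide real_sqrt_mult field_simps)
  finally show ?thesis unfolding E_def by (simp only: of_real_eq_iff)
qed

subsection \<open>The commutator estimate\<close>

text \<open>Gaussian mean of the squared oscillation of q around x at scale sqrt e; it tends to 0 with e
  when q is continuous and bounded.\<close>
definition osc :: "(real \<Rightarrow> real) \<Rightarrow> real \<Rightarrow> real \<Rightarrow> real" where
  "osc q e x = (LINT t|lborel. (q x - q (x - sqrt e * t))^2 * exp (- (t^2) / 2))"

lemma osc_measurable [measurable]:
  assumes "q \<in> borel_measurable borel"
  shows "osc q e \<in> borel_measurable borel"
proof -
  have [measurable]: "q \<in> borel_measurable lborel" using assms by simp
  have "osc q e \<in> borel_measurable lborel" unfolding osc_def[abs_def] by measurable
  then show ?thesis by simp
qed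

text \<open>The substitution s = x - sqrt e t turns the heat-kernel average of (q x - q s)^2 into sqrt e times osc.\<close>
lemma osc_substitution:
  assumes e: "e > 0"
  shows "(LINT s|lborel. (q x - q s)^2 * exp (- ((x - s)^2) / (2*e))) = sqrt e * osc q e x"
proof -
  let ?f = "\<lambda>s. (q x - q s)^2 * exp (- ((x - s)^2) / (2*e))"
  have "(LINT s|lborel. ?f s) = \<bar>- sqrt e\<bar> *\<^sub>R (LINT t|lborel. ?f (x + (- sqrt e) * t))"
    by (rule lborel_integral_real_affine) (use e in simp)
  also have "(\<lambda>t. ?f (x + (- sqrt e) * t)) = (\<lambda>t. (q x - q (x - sqrt e * t))^2 * exp (- (t^2) / 2))"
  proof
    fix t
    have "(x - (x + - sqrt e * t))^2 / (2*e) = t^2/2" using e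
      by (simp add: power2_eq_square field_simps)
    then show "?f (x + (- sqrt e) * t) = (q x - q (x - sqrt e * t))^2 * exp (- (t^2) / 2)"
      by (simp add: algebra_simps)
  qed
  finally show ?thesis using e by (simp add: osc_def)
qed

lemma bounded_diff_sq:
  assumes qb: "\<And>x. \<bar>q x\<bar> \<le> (Q::real)"
  shows "(q x - q y)^2 \<le> 4 * Q^2"
proof -
  have "\<bar>q x - q y\<bar> \<le> 2 * Q" using qb[of x] qb[of y] by linarith
  then have "\<bar>q x - q y\<bar>^2 \<le> (2*Q)^2" by (intro power_mono) auto
  then show ?thesis by (simp add: power_mult_distrib)
qed

lemma osc_bounds:
  assumes [measurable]: "q \<in> borel_measurable borel" and qb: "\<And>x. \<bar>q x\<bar> \<le> Q"
  shows "0 \<le> osc q e x" "osc q e x \<le> 4 * Q^2 * sqrt (2*pi)"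
proof -
  show "0 \<le> osc q e x" unfolding osc_def by simp
  have qd: "\<And>a b. (q a - q b)^2 \<le> 4*Q^2" by (rule bounded_diff_sq[of q Q, OF qb])
  have gi: "integrable lborel (\<lambda>t::real. exp (- ((t - 0)^2) / (2*1)))" by (rule heat_kernel_integral(1)) simp
  have gv: "(LINT t|lborel. exp (- ((t - 0)^2) / (2*1))) = sqrt (2*pi*1)" by (rule heat_kernel_integral(2)) simp
  have "osc q e x \<le> (LINT t|lborel. 4 * Q^2 * exp (- (t^2) / 2))"
    unfolding osc_def
  proof (rule integral_mono)
    show "integrable lborel (\<lambda>t. 4 * Q^2 * exp (- (t^2) / 2))" using gi by simp
    show "integrable lborel (\<lambda>t. (q x - q (x - sqrt e * t))\<^sup>2 * exp (- t\<^sup>2 / 2))"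
      by (rule Bochner_Integration.integrable_bound[of _ "\<lambda>t. 4 * Q^2 * exp (- (t^2) / 2)"])
         (use gi qd in \<open>auto intro!: mult_right_mono\<close>)
    show "(q x - q (x - sqrt e * t))\<^sup>2 * exp (- t\<^sup>2 / 2) \<le> 4 * Q\<^sup>2 * exp (- t\<^sup>2 / 2)" for t
      using qd by (intro mult_right_mono) auto
  qed
  also have "\<dots> = 4 * Q^2 * sqrt (2*pi)" using gv by simp
  finally show "osc q e x \<le> 4 * Q^2 * sqrt (2*pi)" .
qed

text \<open>The commutator density: the integrand whose x-integral bounds the commutator of the heat
  convolution with multiplication by q.\<close>
definition commutator_density ::
  "(real \<Rightarrow> real) \<Rightarrow> (real \<Rightarrow> complex) \<Rightarrow> real \<Rightarrow> real \<Rightarrow> real \<Rightarrow> real" where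
  "commutator_density q u e x s = (q x - q s)^2 * (cmod (u x))^2 * exp (- ((x - s)^2) / (2*e))"

text \<open>The heat convolution of (q - q(s)) u, evaluated at s, is controlled by Cauchy-Schwarz
  against the heat kernel through the x-integral of the commutator density.\<close>
lemma commutator_term_bound:
  fixes s :: real
  assumes us: "sq_integrable u" and e: "e > 0" and [measurable]: "q \<in> borel_measurable borel"
    and qb: "\<And>x. \<bar>q x\<bar> \<le> Q"
  defines "G \<equiv> \<lambda>x. exp (- ((x - s)^2) / (2*e))"
  shows "integrable lborel (\<lambda>x. of_real (q x - q s) * (u x * of_real (G x)))"
    and "(cmod (LINT x|lborel. of_real (q x - q s) * (u x * of_real (G x))))^2
         \<le> sqrt (2*pi*e) * (LINT x|lborel. commutator_density q u e x s)"
proof -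
  have [measurable]: "u \<in> borel_measurable borel" using sq_integrable_measurable[OF us] .
  have ui: "integrable lborel (\<lambda>x. (cmod (u x))^2)" using us unfolding sq_integrable_def by simp
  have Q0: "0 \<le> Q" using qb[of 0] by linarith
  let ?H = "\<lambda>x. commutator_density q u e x s"
  have ug: "integrable lborel (\<lambda>x. u x * of_real (G x))"
    using integrable_gaussian_weighted[OF us, of "2*e" s] e unfolding G_def by simp
  show "integrable lborel (\<lambda>x. of_real (q x - q s) * (u x * of_real (G x)))"
  proof (rule Bochner_Integration.integrable_bound[OF integrable_norm[OF integrable_mult_right[OF ug, of "of_real (2*Q)"]]])
    show "(\<lambda>x. complex_of_real (q x - q s) * (u x * complex_of_real (G x))) \<in> borel_measurable lborel"
      unfolding G_def by measurable
    show "AE x in lborel. norm (complex_of_real (q x - q s) * (u x * complex_of_real (G x)))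
          \<le> norm (norm (complex_of_real (2*Q) * (u x * complex_of_real (G x))))"
    proof (intro AE_I2)
      fix x
      have "\<bar>q x - q s\<bar> \<le> 2*Q" using qb[of x] qb[of s] by linarith
      then have "cmod (complex_of_real (q x - q s)) \<le> 2*Q" by (simp only: norm_of_real)
      then show "norm (complex_of_real (q x - q s) * (u x * complex_of_real (G x)))
          \<le> norm (norm (complex_of_real (2*Q) * (u x * complex_of_real (G x))))"
        using Q0 by (simp add: norm_mult) (auto intro!: mult_right_mono)
    qed
  qed
  have H_int: "integrable lborel ?H"
  proof (rule Bochner_Integration.integrable_bound[OF integrable_mult_right[OF ui, of "4*Q^2"]])
    show "?H \<in> borel_measurable lborel" unfolding commutator_density_def by measurable
    show "AE x in lborel. norm (?H x) \<le> norm (4 * Q\<^sup>2 * (cmod (u x))\<^sup>2)"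
    proof (intro AE_I2)
      fix x
      have "?H x \<le> (4*Q^2 * (cmod (u x))^2) * 1"
        unfolding commutator_density_def using e bounded_diff_sq[of q Q, OF qb]
        by (intro mult_mono) (auto intro!: mult_right_mono)
      then show "norm (?H x) \<le> norm (4 * Q\<^sup>2 * (cmod (u x))\<^sup>2)"
        by (simp add: commutator_density_def)
    qed
  qed
  define P where "P = (LINT x|lborel. (\<bar>q x - q s\<bar> * cmod (u x)) * G x)"
  have "cmod (LINT x|lborel. of_real (q x - q s) * (u x * of_real (G x))) \<le> P"
    unfolding P_def
    by (rule order.trans[OF integral_norm_bound]) (simp add: G_def norm_mult mult.assoc flip: of_real_diff)
  then have "(cmod (LINT x|lborel. of_real (q x - q s) * (u x * of_real (G x))))^2 \<le> P^2"
    by (intro power_mono) auto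
  also have "P^2 \<le> (LINT x|lborel. G x) * (LINT x|lborel. (\<bar>q x - q s\<bar> * cmod (u x))^2 * G x)"
    unfolding P_def G_def
  proof (rule weighted_cauchy_schwarz(2))
    show "integrable lborel (\<lambda>x. (\<bar>q x - q s\<bar> * cmod (u x))\<^sup>2 * exp (- ((x - s)^2) / (2*e)))"
      using H_int unfolding commutator_density_def by (simp add: power_mult_distrib)
  qed (use heat_kernel_integral(1)[OF e] in auto)
  also have "\<dots> = sqrt (2*pi*e) * (LINT x|lborel. ?H x)"
    unfolding commutator_density_def G_def heat_kernel_integral(2)[OF e] by (simp add: power_mult_distrib)
  finally show "(cmod (LINT x|lborel. of_real (q x - q s) * (u x * of_real (G x))))^2
         \<le> sqrt (2*pi*e) * (LINT x|lborel. ?H x)" .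
qed

text \<open>Pointwise estimate: W(q u)(s) = q(s) W u(s) + W((q - q(s)) u)(s), and the second term is
  bounded by the previous lemma.\<close>
lemma heat_conv_mult_pointwise:
  assumes us: "sq_integrable u" and e: "e > 0" and qm[measurable]: "q \<in> borel_measurable borel"
    and qb: "\<And>x. \<bar>q x\<bar> \<le> Q"
  shows "(cmod (heat_conv e (\<lambda>x. complex_of_real (q x) * u x) s))^2
       \<le> 2*Q^2*(cmod (heat_conv e u s))^2 + 2 * sqrt (2*pi*e) * (LINT x|lborel. commutator_density q u e x s)"
proof -
  let ?G = "\<lambda>x. exp (- ((x - s)^2) / (2*e))"
  define C where "C = (LINT x|lborel. of_real (q x - q s) * (u x * of_real (?G x)))"
  have ug: "integrable lborel (\<lambda>x. u x * of_real (?G x))"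
    using integrable_gaussian_weighted[OF us, of "2*e" s] e by simp
  have "heat_conv e (\<lambda>x. complex_of_real (q x) * u x) s
      = (LINT x|lborel. of_real (q s) * (u x * of_real (?G x)) + of_real (q x - q s) * (u x * of_real (?G x)))"
    unfolding heat_conv_def by (rule Bochner_Integration.integral_cong) (auto simp: algebra_simps)
  then have decomp: "heat_conv e (\<lambda>x. complex_of_real (q x) * u x) s = of_real (q s) * heat_conv e u s + C"
    unfolding C_def heat_conv_def
    by (subst (asm) Bochner_Integration.integral_add[OF integrable_mult_right[OF ug]
          commutator_term_bound(1)[OF us e qm qb]]) simp
  have "(cmod (heat_conv e (\<lambda>x. complex_of_real (q x) * u x) s))^2
      \<le> (cmod (of_real (q s) * heat_conv e u s) + cmod C)^2"
    unfolding decomp by (intro power_mono norm_triangle_ineq) simp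
  also have "\<dots> \<le> 2 * (cmod (of_real (q s) * heat_conv e u s))^2 + 2 * (cmod C)^2"
    by (smt (verit) sum_squares_bound power2_sum zero_le_power2)
  moreover have "(cmod (of_real (q s) * heat_conv e u s))^2 \<le> Q^2 * (cmod (heat_conv e u s))^2"
  proof -
    have "(q s)^2 \<le> Q^2" using power_mono[OF qb[of s], of 2] by simp
    then show ?thesis unfolding norm_mult power_mult_distrib
      by (intro mult_right_mono) auto
  qed
  moreover have "(cmod C)^2 \<le> sqrt (2*pi*e) * (LINT x|lborel. commutator_density q u e x s)"
    unfolding C_def by (rule commutator_term_bound(2)[OF us e qm qb])
  ultimately show ?thesis by linarith
qed

text \<open>Integrating the commutator density in s first turns it into the oscillation of q.\<close>
lemma commutator_density_integral:
  assumes us: "sq_integrable u" and e: "e > 0" and qm[measurable]: "q \<in> borel_measurable borel"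
    and qb: "\<And>x. \<bar>q x\<bar> \<le> Q"
  shows "integrable lborel (\<lambda>s. LINT x|lborel. commutator_density q u e x s)"
    and "(LINT s|lborel. LINT x|lborel. commutator_density q u e x s)
         = sqrt e * (LINT x|lborel. (cmod (u x))^2 * osc q e x)"
proof -
  have [measurable]: "u \<in> borel_measurable borel" using sq_integrable_measurable[OF us] .
  have ui: "integrable lborel (\<lambda>x. (cmod (u x))^2)" using us unfolding sq_integrable_def by simp
  have qd: "\<And>a b. (q a - q b)^2 \<le> 4*Q^2" by (rule bounded_diff_sq[of q Q, OF qb])
  let ?H = "commutator_density q u e"
  have inner_s: "(LINT s|lborel. ?H x s) = (cmod (u x))^2 * (sqrt e * osc q e x)" for x
  proof -
    have "(LINT s|lborel. ?H x s) = (cmod (u x))^2 * (LINT s|lborel. (q x - q s)^2 * exp (- ((x - s)^2) / (2*e)))"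
      unfolding commutator_density_def by (simp add: mult_ac)
    then show ?thesis by (simp only: osc_substitution[OF e])
  qed
  have H_prod: "integrable (lborel \<Otimes>\<^sub>M lborel) (\<lambda>(x, s). ?H x s)"
  proof (rule lborel_pair.Fubini_integrable)
    show "(\<lambda>(x, s). ?H x s) \<in> borel_measurable (lborel \<Otimes>\<^sub>M lborel)"
      unfolding commutator_density_def by measurable
    have "(\<lambda>x. LINT s|lborel. norm ((\<lambda>(x, s). ?H x s) (x, s))) = (\<lambda>x. (cmod (u x))^2 * (sqrt e * osc q e x))"
      using inner_s by (simp add: commutator_density_def)
    moreover have "integrable lborel (\<lambda>x. (cmod (u x))^2 * (sqrt e * osc q e x))"
    proof (rule Bochner_Integration.integrable_bound[OF integrable_mult_right[OF ui, of "sqrt e * (4 * Q^2 * sqrt (2*pi))"]])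
      show "(\<lambda>x. (cmod (u x))\<^sup>2 * (sqrt e * osc q e x)) \<in> borel_measurable lborel" by measurable
      show "AE x in lborel. norm ((cmod (u x))\<^sup>2 * (sqrt e * osc q e x)) \<le> norm (sqrt e * (4 * Q\<^sup>2 * sqrt (2 * pi)) * (cmod (u x))\<^sup>2)"
      proof (intro AE_I2)
        fix x
        have "(cmod (u x))\<^sup>2 * (sqrt e * osc q e x) \<le> (cmod (u x))\<^sup>2 * (sqrt e * (4 * Q\<^sup>2 * sqrt (2 * pi)))"
          using osc_bounds[OF qm qb, of e x] e by (intro mult_left_mono) auto
        moreover have "0 \<le> (cmod (u x))\<^sup>2 * (sqrt e * osc q e x)"
          using osc_bounds[OF qm qb, of e x] e by auto
        ultimately show "norm ((cmod (u x))\<^sup>2 * (sqrt e * osc q e x)) \<le> norm (sqrt e * (4 * Q\<^sup>2 * sqrt (2 * pi)) * (cmod (u x))\<^sup>2)"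
          by (simp add: mult_ac)
      qed
    qed
    ultimately show "integrable lborel (\<lambda>x. LINT s|lborel. norm ((\<lambda>(x, s). ?H x s) (x, s)))" by simp
    show "AE x in lborel. integrable lborel (\<lambda>s. (\<lambda>(x, s). ?H x s) (x, s))"
    proof (intro AE_I2)
      fix x
      show "integrable lborel (\<lambda>s. (\<lambda>(x, s). ?H x s) (x, s))"
        unfolding commutator_density_def
        by (rule Bochner_Integration.integrable_bound[OF integrable_mult_right[OF heat_kernel_integral(3)[OF e, of x], of "4*Q^2*(cmod (u x))^2"]])
           (use qd in \<open>auto simp: abs_mult intro!: mult_right_mono\<close>)
    qed
  qed
  have "integrable (lborel \<Otimes>\<^sub>M lborel) (\<lambda>(s, x). ?H x s)"
    using lborel_pair.integrable_product_swap[OF H_prod] by simp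
  from lborel_pair.integrable_fst'[OF this]
  show "integrable lborel (\<lambda>s. LINT x|lborel. ?H x s)" by simp
  have "(LINT s|lborel. LINT x|lborel. ?H x s) = (LINT x|lborel. LINT s|lborel. ?H x s)"
    using lborel_pair.Fubini_integral[of "\<lambda>x s. ?H x s"] H_prod by simp
  then show "(LINT s|lborel. LINT x|lborel. ?H x s) = sqrt e * (LINT x|lborel. (cmod (u x))^2 * osc q e x)"
    by (simp only: inner_s) (simp add: mult_ac)
qed

lemma heat_conv_mult_estimate:
  assumes us: "sq_integrable u" and e: "e > 0" and qm[measurable]: "q \<in> borel_measurable borel"
    and qb: "\<And>x. \<bar>q x\<bar> \<le> Q"
  shows "(LINT s|lborel. (cmod (heat_conv e (\<lambda>x. complex_of_real (q x) * u x) s))^2)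
     \<le> 2*Q^2*(LINT s|lborel. (cmod (heat_conv e u s))^2) + 2 * e * sqrt (2*pi)*(LINT x|lborel. (cmod (u x))^2 * osc q e x)"
proof -
  let ?qu = "\<lambda>x. complex_of_real (q x) * u x"
  let ?D = "\<lambda>s. LINT x|lborel. commutator_density q u e x s"
  have qus: "sq_integrable ?qu" by (rule sq_integrable_bounded_multiple[OF us qm qb])
  have D_int: "integrable lborel ?D" by (rule commutator_density_integral(1)[OF us e qm qb])
  have "(LINT s|lborel. (cmod (heat_conv e ?qu s))^2)
      \<le> (LINT s|lborel. 2*Q^2*(cmod (heat_conv e u s))^2 + 2* sqrt (2*pi*e) * ?D s)"
    by (rule integral_mono[OF heat_conv_sq_integrable[OF qus e] _ heat_conv_mult_pointwise[OF us e qm qb]])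
       (use heat_conv_sq_integrable[OF us e] D_int in auto)
  also have "\<dots> = 2*Q^2*(LINT s|lborel. (cmod (heat_conv e u s))^2) + 2* sqrt (2*pi*e) * (LINT s|lborel. ?D s)"
    using heat_conv_sq_integrable[OF us e] D_int by simp
  also have "2* sqrt (2*pi*e) * (LINT s|lborel. ?D s) = 2 * e * sqrt (2*pi)*(LINT x|lborel. (cmod (u x))^2 * osc q e x)"
  proof -
    have "sqrt (2*pi*e) * sqrt e = e * sqrt (2*pi)" using e
      by (simp add: real_sqrt_mult mult_ac)
    then show ?thesis unfolding commutator_density_integral(2)[OF us e qm qb]
      by (metis (no_types, lifting) mult.assoc mult.left_commute)
  qed
  finally show ?thesis .
qed

text \<open>By dominated convergence, osc q e x tends to 0 as e = 1/(n+1) tends to 0, for continuous bounded q.\<close>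
lemma osc_tendsto_zero:
  assumes qc: "continuous_on UNIV q" and qb: "\<And>x. \<bar>q x\<bar> \<le> Q"
  shows "(\<lambda>n. osc q (1 / real (Suc n)) x) \<longlonglongrightarrow> 0"
proof -
  have [measurable]: "q \<in> borel_measurable borel" using qc by (rule borel_measurable_continuous_onI)
  have scale: "(\<lambda>n. sqrt (1 / real (Suc n))) \<longlonglongrightarrow> 0"
    using tendsto_real_sqrt[OF LIMSEQ_Suc[OF lim_const_over_n[of 1]]] by simp
  have gi: "integrable lborel (\<lambda>t::real. 4 * Q^2 * exp (- ((t - 0)^2) / (2*1)))"
    using heat_kernel_integral(1)[of 1 0] by simp
  have meas: "(\<lambda>t. (q x - q (x - sqrt (1 / real (Suc n)) * t))^2 * exp (- (t^2) / 2)) \<in> borel_measurable lborel" for n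
    by measurable
  have dom: "AE t in lborel. norm ((q x - q (x - sqrt (1 / real (Suc n)) * t))^2 * exp (- (t^2) / 2))
            \<le> 4 * Q^2 * exp (- ((t - 0)^2) / (2*1))" for n
    using bounded_diff_sq[of q Q, OF qb] by (auto intro!: mult_right_mono)
  have lim: "AE t in lborel. (\<lambda>n. (q x - q (x - sqrt (1 / real (Suc n)) * t))^2 * exp (- (t^2) / 2)) \<longlonglongrightarrow> 0"
  proof (intro AE_I2)
    fix t
    have "(\<lambda>n. x - sqrt (1 / real (Suc n)) * t) \<longlonglongrightarrow> x - 0 * t"
      by (intro tendsto_intros scale)
    then have "(\<lambda>n. q (x - sqrt (1 / real (Suc n)) * t)) \<longlonglongrightarrow> q x"
      using qc by (simp add: continuous_on_tendsto_compose[of UNIV q])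
    then have "(\<lambda>n. (q x - q (x - sqrt (1 / real (Suc n)) * t))^2 * exp (- (t^2) / 2)) \<longlonglongrightarrow> (q x - q x)^2 * exp (- (t^2) / 2)"
      by (intro tendsto_intros)
    then show "(\<lambda>n. (q x - q (x - sqrt (1 / real (Suc n)) * t))^2 * exp (- (t^2) / 2)) \<longlonglongrightarrow> 0" by simp
  qed
  have "(\<lambda>n. LINT t|lborel. (q x - q (x - sqrt (1 / real (Suc n)) * t))^2 * exp (- (t^2) / 2)) \<longlonglongrightarrow> 0"
    using integral_dominated_convergence[OF _ meas gi lim dom] by simp
  then show ?thesis by (simp add: osc_def)
qed

text \<open>The oscillation weighted by |u|^2 also tends to 0 (dominated convergence again).\<close>
lemma integral_osc_tendsto_zero:
  assumes us: "sq_integrable u" and qc: "continuous_on UNIV q" and qb: "\<And>x. \<bar>q x\<bar> \<le> Q"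
  shows "(\<lambda>n. LINT x|lborel. (cmod (u x))^2 * osc q (1 / real (Suc n)) x) \<longlonglongrightarrow> 0"
proof -
  have qm[measurable]: "q \<in> borel_measurable borel" using qc by (rule borel_measurable_continuous_onI)
  have [measurable]: "u \<in> borel_measurable borel" using sq_integrable_measurable[OF us] .
  have ui: "integrable lborel (\<lambda>x. 4 * Q^2 * sqrt (2*pi) * (cmod (u x))^2)"
    using us unfolding sq_integrable_def by simp
  have meas: "(\<lambda>x. (cmod (u x))^2 * osc q (1 / real (Suc n)) x) \<in> borel_measurable lborel" for n
    by measurable
  have dom: "AE x in lborel. norm ((cmod (u x))^2 * osc q (1 / real (Suc n)) x) \<le> 4 * Q^2 * sqrt (2*pi) * (cmod (u x))^2" for n
  proof (intro AE_I2)
    fix x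
    have "(cmod (u x))^2 * osc q (1 / real (Suc n)) x \<le> (cmod (u x))^2 * (4 * Q^2 * sqrt (2*pi))"
      using osc_bounds[OF qm qb] by (intro mult_left_mono) auto
    moreover have "0 \<le> (cmod (u x))^2 * osc q (1 / real (Suc n)) x"
      using osc_bounds[OF qm qb] by auto
    ultimately show "norm ((cmod (u x))^2 * osc q (1 / real (Suc n)) x) \<le> 4 * Q^2 * sqrt (2*pi) * (cmod (u x))^2"
      by (simp add: mult_ac)
  qed
  have lim: "AE x in lborel. (\<lambda>n. (cmod (u x))^2 * osc q (1 / real (Suc n)) x) \<longlonglongrightarrow> 0"
    using tendsto_mult_right_zero[OF osc_tendsto_zero[OF qc qb]] by simp
  show ?thesis using integral_dominated_convergence[OF _ meas ui lim dom] by simp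
qed

subsection \<open>A continuous bounded version of a function in H^m, m >= 1\<close>

text \<open>The function 1/(1 + k^2) is integrable over the line (its primitive is arctan).\<close>
lemma integrable_inverse_one_plus_sq: "integrable lborel (\<lambda>k::real. inverse (1 + k^2))"
proof (rule integrableI_nonneg)
  show "(\<lambda>k::real. inverse (1 + k^2)) \<in> borel_measurable lborel" by measurable
  show "AE x in lborel. 0 \<le> inverse (1 + x^2::real)" by simp
  let ?g = "\<lambda>x::real. ennreal (inverse (1 + x^2)) * indicator {0..} x"
  have half: "(\<integral>\<^sup>+x. ?g x \<partial>lborel) = ennreal (pi/2 - arctan 0)"
    by (rule nn_integral_FTC_atLeast) (auto intro: DERIV_arctan tendsto_arctan_at_top)
  have gm[measurable]: "?g \<in> borel_measurable borel" by measurable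
  have reflect: "(\<integral>\<^sup>+x. ?g x \<partial>lborel) = (\<integral>\<^sup>+x. ?g (0 + (-1) * x) \<partial>lborel)"
    using nn_integral_real_affine[OF gm, of "-1" 0] by simp
  have "(\<integral>\<^sup>+x. ennreal (inverse (1 + x^2)) \<partial>lborel) \<le> (\<integral>\<^sup>+x. ?g x + ?g (0 + (-1) * x) \<partial>lborel)"
    by (intro nn_integral_mono) (auto split: split_indicator)
  also have "\<dots> = (\<integral>\<^sup>+x. ?g x \<partial>lborel) + (\<integral>\<^sup>+x. ?g (0 + (-1) * x) \<partial>lborel)"
    by (rule nn_integral_add) auto
  also have "\<dots> = ennreal (pi/2) + ennreal (pi/2)" using half reflect by simp
  also have "\<dots> < \<infinity>" by simp
  finally show "(\<integral>\<^sup>+x. ennreal (inverse (1 + x^2)) \<partial>lborel) < \<infinity>" .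
qed

text \<open>For m >= 1 the weight (1 + k^2)^m makes the transform of an H^m function integrable:
  |U| <= ((1 + k^2)^m |U|^2 + (1 + k^2)^-1) / 2.\<close>
lemma sobolev_transform_integrable:
  assumes m: "m \<ge> 1" and I: "integrable lborel (\<lambda>k. (1 + k^2) powr m * (cmod (U k))^2)"
    and [measurable]: "U \<in> borel_measurable borel"
  shows "integrable lborel U"
proof -
  have "integrable lborel (\<lambda>k. ((1 + k^2) powr m * (cmod (U k))^2 + inverse (1 + k^2)) / 2)"
    using I integrable_inverse_one_plus_sq by auto
  then show ?thesis
  proof (rule Bochner_Integration.integrable_bound)
    show "U \<in> borel_measurable lborel" by simp
    show "AE k in lborel. norm (U k) \<le> norm (((1 + k^2) powr m * (cmod (U k))^2 + inverse (1 + k^2)) / 2)"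
    proof (intro AE_I2)
      fix k :: real
      define A where "A = (1 + k^2) powr m"
      have k1: "1 \<le> 1 + k^2" by simp
      have "(1 + k^2) powr 1 \<le> (1 + k^2) powr m" by (rule powr_mono[OF m k1])
      then have A1: "A \<ge> 1 + k^2" unfolding A_def by simp
      have k0: "0 < 1 + k^2" using k1 by linarith
      have Ap: "A > 0" using A1 k0 by linarith
      have "inverse A \<le> inverse (1 + k^2)" using A1 k0 by (intro le_imp_inverse_le) auto
      moreover have "cmod (U k) \<le> (A * (cmod (U k))^2 + inverse A) / 2"
      proof -
        have "0 \<le> (A * cmod (U k) - 1)^2 / A" using Ap by simp
        also have "(A * cmod (U k) - 1)^2 / A = A * (cmod (U k))^2 + inverse A - 2 * cmod (U k)"
          using Ap by (simp add: power2_eq_square field_simps)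
        finally show ?thesis by simp
      qed
      ultimately have "cmod (U k) \<le> (A * (cmod (U k))^2 + inverse (1 + k^2)) / 2" by simp
      moreover have "0 \<le> A * (cmod (U k))^2 + inverse (1 + k^2)" using Ap by (simp add: add_nonneg_nonneg)
      ultimately show "norm (U k) \<le> norm (((1 + k^2) powr m * (cmod (U k))^2 + inverse (1 + k^2)) / 2)"
        by (simp add: A_def)
    qed
  qed
qed

definition inv_fourier :: "(real \<Rightarrow> complex) \<Rightarrow> real \<Rightarrow> complex" where
  "inv_fourier H x = (LINT k|lborel. H k * exp (\<i> * of_real (k * x))) / (2 * of_real pi)"

text \<open>The inverse transform of an integrable function is continuous (dominated convergence).\<close>
lemma inv_fourier_continuous:
  assumes Hi: "integrable lborel H"
  shows "continuous_on UNIV (inv_fourier H)"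
proof -
  have [measurable]: "H \<in> borel_measurable borel" using Hi by simp
  have "isCont (inv_fourier H) x" for x
    unfolding continuous_at_sequentially
  proof safe
    fix X assume X: "X \<longlonglongrightarrow> x"
    have dom_int: "integrable lborel (\<lambda>k. cmod (H k))" using Hi by simp
    have lim_meas: "(\<lambda>k. H k * exp (\<i> * of_real (k * x))) \<in> borel_measurable lborel" by measurable
    have meas: "(\<lambda>k. H k * exp (\<i> * of_real (k * X n))) \<in> borel_measurable lborel" for n by measurable
    have dom: "AE k in lborel. norm (H k * exp (\<i> * of_real (k * X n))) \<le> cmod (H k)" for n
      by (simp add: norm_mult)
    have lim: "AE k in lborel. (\<lambda>n. H k * exp (\<i> * of_real (k * X n))) \<longlonglongrightarrow> H k * exp (\<i> * of_real (k * x))"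
      by (intro AE_I2 tendsto_intros X)
    have "(\<lambda>n. LINT k|lborel. H k * exp (\<i> * of_real (k * X n))) \<longlonglongrightarrow> (LINT k|lborel. H k * exp (\<i> * of_real (k * x)))"
      using integral_dominated_convergence[OF lim_meas meas dom_int lim dom] by simp
    then show "(inv_fourier H \<circ> X) \<longlonglongrightarrow> inv_fourier H x"
      unfolding inv_fourier_def comp_def divide_inverse by (rule tendsto_mult_right)
  qed
  then show ?thesis by (simp add: continuous_on_eq_continuous_at)
qed

lemma inv_fourier_bound: "cmod (inv_fourier H x) \<le> (LINT k|lborel. cmod (H k)) / (2 * pi)"
proof -
  have "cmod (LINT k|lborel. H k * exp (\<i> * of_real (k * x))) \<le> (LINT k|lborel. cmod (H k * exp (\<i> * of_real (k * x))))"
    by (rule integral_norm_bound)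
  also have "\<dots> = (LINT k|lborel. cmod (H k))" by (simp add: norm_mult)
  finally show ?thesis unfolding inv_fourier_def by (simp add: norm_divide divide_right_mono)
qed

lemma fourier_test_gaussian:
  "(LINT y|lborel. exp (- (\<i> * of_real (\<xi> * y))) * of_real (sqrt pi * exp (- (y^2) / 4)))
     = 2 * of_real pi * of_real (exp (- (\<xi>^2)))"
proof -
  have "(LINT y|lborel. exp (- (\<i> * of_real (\<xi> * y))) * of_real (sqrt pi * exp (- (y^2) / 4)))
      = of_real (sqrt pi) * (LINT y|lborel. exp (- (\<i> * of_real (\<xi> * y))) * of_real (exp (- (1/4) * (y - 0)^2)))"
    by (subst integral_mult_right_zero[symmetric]) (rule Bochner_Integration.integral_cong, auto simp: mult_ac)
  also have "\<dots> = of_real (sqrt pi) * (exp (- (\<i> * of_real (\<xi> * 0))) * of_real (sqrt (pi / (1/4)) * exp (- (\<xi>^2) / (4 * (1/4)))))"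
    by (subst fourier_gaussian) simp_all
  also have "\<dots> = of_real (sqrt pi * sqrt (pi / (1/4))) * of_real (exp (- (\<xi>^2)))"
    by simp
  also have "sqrt pi * sqrt (pi / (1/4)) = 2 * pi"
  proof -
    have "sqrt pi * sqrt (pi / (1/4)) = sqrt ((2*pi)^2)"
      by (simp add: real_sqrt_mult[symmetric] power2_eq_square mult_ac)
    also have "\<dots> = 2 * pi" by (rule real_sqrt_unique) auto
    finally show ?thesis .
  qed
  finally show ?thesis by simp
qed

lemma integrable_test_gaussian: "integrable lborel (\<lambda>y. sqrt pi * exp (- (y^2) / 4))"
proof -
  have "integrable lborel (\<lambda>y. sqrt pi * exp (- (1/4) * (y - 0)^2))"
    by (intro integrable_mult_right integrable_gaussian) simp
  then show ?thesis by simp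
qed

text \<open>The inverse transform, being bounded, is integrable against the test Gaussian.\<close>
lemma integrable_inv_fourier_gaussian:
  assumes Hi: "integrable lborel H"
  shows "integrable lborel (\<lambda>y. inv_fourier H y * of_real (sqrt pi * exp (- (y^2) / 4)))"
proof -
  have [measurable]: "inv_fourier H \<in> borel_measurable borel"
    using inv_fourier_continuous[OF Hi] by (rule borel_measurable_continuous_onI)
  define g where "g y = sqrt pi * exp (- (y^2) / 4)" for y
  have gi: "integrable lborel g"
    unfolding g_def by (rule integrable_test_gaussian)
  have gnn: "0 \<le> g y" for y unfolding g_def by simp
  define B where "B = (LINT k|lborel. cmod (H k)) / (2 * pi)"
  have B0: "0 \<le> B" unfolding B_def by simp
  show ?thesis unfolding g_def[symmetric]
  proof (rule Bochner_Integration.integrable_bound[OF integrable_mult_right[OF gi, of B]])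
    show "(\<lambda>y. inv_fourier H y * complex_of_real (g y)) \<in> borel_measurable lborel" unfolding g_def by measurable
    show "AE y in lborel. norm (inv_fourier H y * complex_of_real (g y)) \<le> norm (B * g y)"
    proof (intro AE_I2)
      fix y
      have "cmod (inv_fourier H y) * g y \<le> B * g y"
        using inv_fourier_bound[of H y] gnn unfolding B_def by (intro mult_right_mono)
      then show "norm (inv_fourier H y * complex_of_real (g y)) \<le> norm (B * g y)"
        using gnn B0 by (simp add: norm_mult abs_mult)
    qed
  qed
qed

text \<open>Inversion formula in weak form: pairing the inverse transform, times the test Gaussian,
  with exp(-i t y) gives H paired with a shifted Gaussian (Fubini).\<close>
lemma inv_fourier_gaussian_pairing:
  assumes Hi: "integrable lborel H"
  shows "(LINT y|lborel. exp (- (\<i> * of_real (t*y))) * (inv_fourier H y * of_real (sqrt pi * exp (- (y^2) / 4))))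
        = (LINT k|lborel. H k * of_real (exp (- ((k - t)^2))))"
proof -
  have [measurable]: "H \<in> borel_measurable borel" using Hi by simp
  define g where "g y = sqrt pi * exp (- (y^2) / 4)" for y
  have gi: "integrable lborel g"
    unfolding g_def by (rule integrable_test_gaussian)
  have gnn: "0 \<le> g y" for y unfolding g_def by simp
  let ?F = "\<lambda>(k::real, y::real). H k * exp (\<i> * of_real (k * y)) * (exp (- (\<i> * of_real (t*y))) * of_real (g y))"
  have F_int: "integrable (lborel \<Otimes>\<^sub>M lborel) ?F"
  proof (rule lborel_pair.Fubini_integrable)
    show "?F \<in> borel_measurable (lborel \<Otimes>\<^sub>M lborel)" unfolding g_def by measurable
    have "(\<lambda>k. LINT y|lborel. norm (?F (k, y))) = (\<lambda>k. cmod (H k) * (LINT y|lborel. g y))"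
      using gnn by (auto simp: norm_mult)
    then show "integrable lborel (\<lambda>k. LINT y|lborel. norm (?F (k, y)))"
      using Hi by simp
    show "AE k in lborel. integrable lborel (\<lambda>y. ?F (k, y))"
    proof (intro AE_I2)
      fix k
      show "integrable lborel (\<lambda>y. ?F (k, y))"
      proof (rule Bochner_Integration.integrable_bound[OF integrable_mult_right[OF gi, of "cmod (H k)"]])
        show "(\<lambda>y. ?F (k, y)) \<in> borel_measurable lborel" unfolding g_def case_prod_conv by measurable
        show "AE y in lborel. norm (?F (k, y)) \<le> norm (cmod (H k) * g y)"
          using gnn by (auto simp: norm_mult)
      qed
    qed
  qed
  have "(LINT y|lborel. exp (- (\<i> * of_real (t*y))) * (inv_fourier H y * of_real (g y)))
      = (LINT y|lborel. (LINT k|lborel. ?F (k, y)) / (2 * of_real pi))"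
  proof (rule Bochner_Integration.integral_cong[OF refl])
    fix y
    have "(LINT k|lborel. ?F (k, y)) = (LINT k|lborel. H k * exp (\<i> * of_real (k * y))) * (exp (- (\<i> * of_real (t*y))) * of_real (g y))"
      by (simp only: case_prod_conv integral_mult_left_zero)
    then show "exp (- (\<i> * of_real (t*y))) * (inv_fourier H y * of_real (g y)) = (LINT k|lborel. ?F (k, y)) / (2 * of_real pi)"
      unfolding inv_fourier_def by (simp add: mult_ac)
  qed
  also have "\<dots> = (LINT y|lborel. LINT k|lborel. ?F (k, y)) / (2 * of_real pi)"
    by (rule integral_divide_zero)
  also have "(LINT y|lborel. LINT k|lborel. ?F (k, y)) = (LINT k|lborel. LINT y|lborel. ?F (k, y))"
    using lborel_pair.Fubini_integral[of "\<lambda>k y. ?F (k, y)"] F_int by simp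
  also have "\<dots> = (LINT k|lborel. H k * (2 * of_real pi * of_real (exp (- ((k - t)^2)))))"
  proof (rule Bochner_Integration.integral_cong[OF refl])
    fix k
    have "(LINT y|lborel. ?F (k, y)) = (LINT y|lborel. H k * (exp (- (\<i> * of_real ((t - k) * y))) * of_real (g y)))"
      by (rule Bochner_Integration.integral_cong) (auto simp: algebra_simps exp_add[symmetric])
    also have "\<dots> = H k * (2 * of_real pi * of_real (exp (- ((k - t)^2))))"
      unfolding g_def by (simp only: integral_mult_right_zero fourier_test_gaussian power2_commute)
    finally show "(LINT y|lborel. ?F (k, y)) = H k * (2 * of_real pi * of_real (exp (- ((k - t)^2))))" .
  qed
  also have "\<dots> / (2 * of_real pi) = (LINT k|lborel. H k * of_real (exp (- ((k - t)^2))))"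
    by (simp add: integral_mult_right_zero[symmetric] mult_ac flip: integral_divide_zero)
  finally show ?thesis unfolding g_def .
qed

text \<open>If the L^2 transform H of h is integrable, h agrees a.e. with the inverse transform of H:
  both have the same pairings against modulated Gaussians.\<close>
lemma inv_fourier_ae:
  assumes F: "is_fourier_L2 h H" and Hi: "integrable lborel H"
  shows "AE x in lborel. h x = inv_fourier H x"
proof -
  have hs: "sq_integrable h" using F unfolding is_fourier_L2_def by auto
  define g where "g y = sqrt pi * exp (- (y^2) / 4)" for y
  have hg: "integrable lborel (\<lambda>y. h y * of_real (g y))"
    using sq_integrable_product_integrable[OF hs sq_integrable_gaussian[of 4 "sqrt pi" 0]]
    by (simp add: g_def)
  have ig: "integrable lborel (\<lambda>y. inv_fourier H y * of_real (g y))"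
    unfolding g_def by (rule integrable_inv_fourier_gaussian[OF Hi])
  define w where "w y = (h y - inv_fourier H y) * of_real (g y)" for y
  have wi: "integrable lborel w"
    unfolding w_def using hg ig by (simp add: algebra_simps)
  have "AE y in lborel. w y = 0"
  proof (rule fourier_unique_L1[OF wi])
    fix t
    have h_pairing: "(LINT y|lborel. exp (- (\<i> * of_real (t*y))) * (h y * of_real (g y)))
        = (LINT k|lborel. H k * of_real (exp (- ((k - t)^2))))"
    proof -
      have "(LINT k|lborel. H k * of_real (exp (- ((k - t)^2))))
          = (LINT k|lborel. H k * (exp (- (\<i> * of_real (0 * k))) * of_real (exp (- 1 * (k - t)^2))))"
        by simp
      also have "\<dots> = (LINT y|lborel. h y * (exp (- (\<i> * of_real ((y + 0) * t))) * of_real (sqrt (pi / 1) * exp (- ((y + 0)^2) / (4 * 1)))))"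
        by (rule fourier_L2_gaussian_pairing[OF F]) simp
      also have "\<dots> = (LINT y|lborel. exp (- (\<i> * of_real (t*y))) * (h y * of_real (g y)))"
        by (rule Bochner_Integration.integral_cong) (auto simp: g_def mult_ac)
      finally show ?thesis by simp
    qed
    have "(LINT y|lborel. exp (- (\<i> * of_real (t*y))) * w y)
       = (LINT y|lborel. exp (- (\<i> * of_real (t*y))) * (h y * of_real (g y)) - exp (- (\<i> * of_real (t*y))) * (inv_fourier H y * of_real (g y)))"
      by (rule Bochner_Integration.integral_cong) (auto simp: w_def algebra_simps)
    also have "\<dots> = 0"
      using h_pairing inv_fourier_gaussian_pairing[OF Hi, of t]
      by (subst Bochner_Integration.integral_diff[OF integrable_fourier_kernel[OF hg] integrable_fourier_kernel[OF ig]])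
         (simp add: g_def)
    finally show "(LINT y|lborel. exp (- (\<i> * of_real (t*y))) * w y) = 0" .
  qed
  then show ?thesis
    by eventually_elim (auto simp: w_def g_def)
qed

text \<open>Composing the continuous bounded version of u_c with a continuous f' yields a continuous
  bounded coefficient that agrees a.e. with f'(u_c).\<close>
lemma sobolev_continuous_bounded_coefficient:
  fixes uc f' :: "real \<Rightarrow> real"
  assumes m: "m \<ge> 1" and uc_H: "sobolev_H m (\<lambda>x. complex_of_real (uc x))"
    and f'_cont: "continuous_on UNIV f'"
  shows "\<exists>q Q. continuous_on UNIV q \<and> (\<forall>x. \<bar>q x\<bar> \<le> Q) \<and> (AE x in lborel. f' (uc x) = q x)"
proof -
  obtain Uc where FUc: "is_fourier_L2 (\<lambda>x. complex_of_real (uc x)) Uc"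
    and IUc: "integrable lborel (\<lambda>k. (1 + k^2) powr m * (cmod (Uc k))^2)"
    using uc_H unfolding sobolev_H_def by blast
  have "Uc \<in> borel_measurable borel"
    using FUc sq_integrable_measurable unfolding is_fourier_L2_def by blast
  then have Uc_int: "integrable lborel Uc" by (rule sobolev_transform_integrable[OF m IUc])
  define ut where "ut = inv_fourier Uc"
  define B where "B = (LINT k|lborel. cmod (Uc k)) / (2 * pi)"
  have ut_bound: "\<bar>Re (ut x)\<bar> \<le> B" for x
    using abs_Re_le_cmod[of "ut x"] inv_fourier_bound[of Uc x] unfolding ut_def B_def by linarith
  define q where "q x = f' (Re (ut x))" for x
  have "continuous_on UNIV (\<lambda>x. Re (ut x))"
    unfolding ut_def by (intro continuous_intros inv_fourier_continuous[OF Uc_int])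
  then have q_cont: "continuous_on UNIV q"
    unfolding q_def by (rule continuous_on_compose2[OF f'_cont]) auto
  have "compact (f' ` {-B..B})"
    by (rule compact_continuous_image[OF continuous_on_subset[OF f'_cont]]) auto
  then obtain Q where Q: "\<And>y. y \<in> f' ` {-B..B} \<Longrightarrow> \<bar>y\<bar> \<le> Q"
    using compact_imp_bounded bounded_real by metis
  have q_bound: "\<bar>q x\<bar> \<le> Q" for x
    using ut_bound[of x] unfolding q_def by (intro Q imageI) auto
  have "AE x in lborel. f' (uc x) = q x"
    using inv_fourier_ae[OF FUc Uc_int]
    by eventually_elim (metis Re_complex_of_real q_def ut_def)
  with q_cont q_bound show ?thesis by blast
qed

subsection \<open>The symbol estimate from the eigenvalue equation\<close>

lemma sum_sq_lower_bound:
  fixes a s y t c :: real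
  assumes "c > 0" "s \<ge> c" "a \<ge> 0"
  shows "(a + s + y*t)^2 + (s*t - y)^2 \<ge> c^2 * t^2 + 2*c*a"
proof -
  have e: "(a + s + y*t)^2 + (s*t - y)^2 = s^2 + s^2 * t^2 + 2* s*a + (a + y*t)^2 + y^2"
    by (simp add: power2_eq_square algebra_simps)
  have "c^2 * t^2 \<le> s^2 * t^2" using assms by (intro mult_right_mono power_mono) auto
  moreover have "2*c*a \<le> 2* s*a" using assms by (intro mult_right_mono) auto
  ultimately show ?thesis unfolding e by (smt (verit) zero_le_power2)
qed

text \<open>Solving the Fourier-side eigenvalue equation for G gives G = w U with an explicit w;
  for Re z <= 0 its modulus satisfies |w|^2 >= lambda^2/k^2 + 2 c alpha(k).\<close>
lemma eigen_symbol_bound: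
  fixes c lam k a :: real and z U G :: complex
  assumes c: "c > 0" and lam: "lam > 0" and k: "k \<noteq> 0" and a: "a \<ge> 0" and z: "Re z \<le> 0"
    and eq: "of_real c * U + (\<i> * of_real k * of_real c / (of_real lam - \<i> * of_real c * of_real k)) * (G - of_real a * U) = z * U"
  shows "(cmod G)^2 \<ge> (lam^2 / k^2 + 2*c*a) * (cmod U)^2"
proof -
  define s where "s = c - Re z"
  define t where "t = lam / (c * k)"
  define w where "w = Complex (a + s + Im z * t) (s*t - Im z)"
  define D where "D = of_real lam - \<i> * of_real c * of_real k"
  define K where "K = \<i> * of_real k * of_real c / D"
  have D0: "D \<noteq> 0" unfolding D_def using lam by (auto simp: complex_eq_iff)
  have K0: "K \<noteq> 0" unfolding K_def using D0 k c by auto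
  have kct: "k * c * t = lam" unfolding t_def using k c by (simp add: field_simps)
  have "\<i> * of_real k * of_real c * (w - of_real a) = (z - of_real c) * D"
    unfolding w_def D_def s_def using kct by (simp add: complex_eq_iff algebra_simps)
  then have w_eq: "K * (w - of_real a) = z - of_real c"
    unfolding K_def using D0 by (simp add: field_simps)
  have "K * (G - of_real a * U) = (z - of_real c) * U" using eq unfolding K_def[symmetric] D_def[symmetric]
    by (simp add: algebra_simps)
  also have "\<dots> = K * (w - of_real a) * U" using w_eq by simp
  finally have "K * (G - w * U) = 0" by (simp add: algebra_simps)
  then have G: "G = w * U" using K0 by simp
  have "(cmod w)^2 = (a + s + Im z * t)^2 + (s*t - Im z)^2" unfolding w_def by (simp add: cmod_power2)
  also have "\<dots> \<ge> c^2 * t^2 + 2*c*a"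
    by (rule sum_sq_lower_bound) (use c a z in \<open>auto simp: s_def\<close>)
  finally have "(cmod w)^2 \<ge> c^2 * t^2 + 2*c*a" .
  moreover have "c^2 * t^2 = lam^2 / k^2" unfolding t_def using c k by (simp add: power2_eq_square field_simps)
  ultimately have "(cmod w)^2 \<ge> lam^2 / k^2 + 2*c*a" by simp
  then show ?thesis unfolding G norm_mult power_mult_distrib by (intro mult_right_mono) auto
qed

text \<open>For large lambda the lower bound lambda^2/k^2 + 2 c alpha(k) exceeds any prescribed M:
  the first term handles |k| <= sqrt lambda, the growth of alpha handles |k| >= sqrt lambda.\<close>
lemma symbol_lower_bound:
  fixes \<alpha> :: "real \<Rightarrow> real" and a m c R M :: real
  assumes alpha_nonneg: "\<And>k. \<alpha> k \<ge> 0" and m: "m \<ge> 1" and a: "a > 0" and c: "c > 0"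
    and growth: "\<And>k. \<bar>k\<bar> \<ge> R \<Longrightarrow> a * \<bar>k\<bar> powr m \<le> \<alpha> k"
  shows "\<exists>\<Lambda>>0. \<forall>lam>\<Lambda>. \<forall>k. k \<noteq> 0 \<longrightarrow> M \<le> lam^2 / k^2 + 2 * c * \<alpha> k"
proof -
  define R1 where "R1 = max R 1"
  define L where "L = max (R1^2) (max M ((M / (2 * c * a))^2))"
  have R1: "R1 \<ge> 1" "R1 \<ge> R" unfolding R1_def by auto
  have L_pos: "L > 0" unfolding L_def using R1 by (smt (verit) one_le_power)
  have "M \<le> lam^2 / k^2 + 2 * c * \<alpha> k" if lamL: "lam > L" and k0: "k \<noteq> 0" for lam k
  proof -
    have lam_pos: "lam > 0" using lamL L_pos by simp
    have "sqrt (R1^2) \<le> sqrt lam" and "sqrt ((M / (2 * c * a))^2) \<le> sqrt lam"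
      using lamL unfolding L_def by (intro real_sqrt_le_mono; simp)+
    then have lam_R: "sqrt lam \<ge> R1" and lam_M: "sqrt lam \<ge> M / (2 * c * a)"
      using R1 by (simp_all only: real_sqrt_abs)
    have nonneg_terms: "0 \<le> 2 * c * \<alpha> k" "0 \<le> lam^2 / k^2" using c alpha_nonneg[of k] by simp_all
    show ?thesis
    proof (cases "\<bar>k\<bar> \<le> sqrt lam")
      case True
      have "k^2 \<le> (sqrt lam)^2" using True by (metis abs_ge_zero power2_abs power_mono)
      then have "k^2 \<le> lam" using lam_pos by simp
      then have "lam^2 / k^2 \<ge> lam^2 / lam" using k0 lam_pos by (intro divide_left_mono) auto
      then have "lam^2 / k^2 \<ge> lam" using lam_pos by (simp add: power2_eq_square)
      moreover have "lam \<ge> M" using lamL unfolding L_def by simp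
      ultimately show ?thesis using nonneg_terms by linarith
    next
      case False
      then have kR: "\<bar>k\<bar> \<ge> R" "\<bar>k\<bar> \<ge> 1" using lam_R R1 by linarith+
      have "\<bar>k\<bar> powr 1 \<le> \<bar>k\<bar> powr m" by (rule powr_mono[OF m kR(2)])
      then have "a * \<bar>k\<bar> \<le> \<alpha> k" using growth[OF kR(1)] a k0 by (smt (verit) mult_left_mono powr_one_gt_zero_iff)
      moreover have "a * sqrt lam \<le> a * \<bar>k\<bar>" using False a by simp
      moreover have "M \<le> 2 * c * (a * sqrt lam)"
        using mult_right_mono[OF lam_M, of "2 * c * a"] c a by (simp add: mult_ac)
      ultimately show ?thesis using c nonneg_terms by (smt (verit) mult_left_mono)
    qed
  qed
  with L_pos show ?thesis by blast
qed

lemma eigenfunction_transform_domination: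
  assumes eig: "kdv_eigenvalue f' \<alpha> m c uc lam z"
    and c: "c > 0" and lam: "lam > 0" and alpha_nonneg: "\<And>k. \<alpha> k \<ge> 0" and z: "Re z \<le> 0"
    and symbol: "\<And>k. k \<noteq> 0 \<Longrightarrow> M \<le> lam^2 / k^2 + 2 * c * \<alpha> k"
  obtains u U G where "is_fourier_L2 u U"
    and "is_fourier_L2 (\<lambda>x. complex_of_real (f' (uc x)) * u x) G"
    and "\<not> (AE x in lborel. u x = 0)"
    and "AE k in lborel. (cmod (G k))^2 \<ge> M * (cmod (U k))^2"
proof -
  obtain u U G where FU: "is_fourier_L2 u U"
    and FG: "is_fourier_L2 (\<lambda>x. complex_of_real (f' (uc x)) * u x) G"
    and nonzero: "\<not> (AE x in lborel. u x = 0)"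
    and eigen: "AE k in lborel. of_real c * U k + (\<i> * of_real k * of_real c / (of_real lam - \<i> * of_real c * of_real k)) * (G k - of_real (\<alpha> k) * U k) = z * U k"
    using eig unfolding kdv_eigenvalue_def by blast
  have "AE k in lborel. (cmod (G k))^2 \<ge> M * (cmod (U k))^2"
    using eigen AE_lborel_singleton[of 0]
  proof eventually_elim
    case (elim k)
    then have "(cmod (G k))^2 \<ge> (lam^2 / k^2 + 2*c*\<alpha> k) * (cmod (U k))^2"
      using eigen_symbol_bound[OF c lam _ alpha_nonneg z] by simp
    then show ?case using symbol[of k] elim(2) by (smt (verit) mult_right_mono zero_le_power2)
  qed
  with FU FG nonzero show thesis by (rule that)
qed

subsection \<open>Vanishing under domination of the symbol\<close>

lemma mult_exp_neg_le:
  assumes "0 \<le> e" "0 \<le> (a::real)" shows "a * exp (- e * x^2) \<le> a"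
proof -
  have "exp (- e * x^2) \<le> 1" using assms by simp
  then show ?thesis using assms by (simp add: mult_left_le)
qed

lemma damped_energy_bound:
  assumes FU: "is_fourier_L2 u U"
    and FG: "is_fourier_L2 (\<lambda>x. complex_of_real (p x) * u x) G"
    and pq: "AE x in lborel. p x = q x"
    and qm[measurable]: "q \<in> borel_measurable borel" and qb: "\<And>x. \<bar>q x\<bar> \<le> Q"
    and GU: "AE k in lborel. (cmod (G k))^2 \<ge> M * (cmod (U k))^2"
    and e: "e > 0"
  shows "(M - 2*Q^2) * (LINT k|lborel. (cmod (U k))^2 * exp (- e * k^2))
         \<le> 2 * sqrt (2*pi) * (LINT x|lborel. (cmod (u x))^2 * osc q e x)"
proof -
  have us: "sq_integrable u" using FU unfolding is_fourier_L2_def by auto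
  have Ui: "integrable lborel (\<lambda>k. (cmod (U k))^2)" and [measurable]: "U \<in> borel_measurable borel"
    using FU unfolding is_fourier_L2_def sq_integrable_def by auto
  have Gi: "integrable lborel (\<lambda>k. (cmod (G k))^2)" and [measurable]: "G \<in> borel_measurable borel"
    using FG unfolding is_fourier_L2_def sq_integrable_def by auto
  have [measurable]: "u \<in> borel_measurable borel" "(\<lambda>x. complex_of_real (p x) * u x) \<in> borel_measurable borel"
    using FU FG sq_integrable_measurable unfolding is_fourier_L2_def by blast+
  define IU where "IU = (LINT k|lborel. (cmod (U k))^2 * exp (- e * k^2))"
  define IG where "IG = (LINT k|lborel. (cmod (G k))^2 * exp (- e * k^2))"
  define J where "J = (LINT x|lborel. (cmod (u x))^2 * osc q e x)"
  have heat_p_q: "heat_conv e (\<lambda>x. complex_of_real (p x) * u x) = heat_conv e (\<lambda>x. complex_of_real (q x) * u x)"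
    unfolding heat_conv_def by (intro ext integral_cong_AE) (use pq in \<open>auto elim!: eventually_mono\<close>)
  have "IG = (1 / e) * (LINT s|lborel. (cmod (heat_conv e (\<lambda>x. complex_of_real (q x) * u x) s))^2)"
    unfolding IG_def damped_plancherel[OF FG e] heat_p_q ..
  also have "\<dots> \<le> (1 / e) * (2*Q^2*(LINT s|lborel. (cmod (heat_conv e u s))^2) + 2 * e * sqrt (2*pi) * J)"
    unfolding J_def by (rule mult_left_mono[OF heat_conv_mult_estimate[OF us e qm qb]]) (use e in simp)
  also have "\<dots> = 2*Q^2 * IU + 2 * sqrt (2*pi) * J"
    unfolding IU_def damped_plancherel[OF FU e] using e by (simp add: field_simps)
  finally have upper: "IG \<le> 2*Q^2 * IU + 2 * sqrt (2*pi) * J" .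
  have "M * IU = (LINT k|lborel. M * ((cmod (U k))^2 * exp (- e * k^2)))"
    unfolding IU_def by simp
  also have "\<dots> \<le> IG" unfolding IG_def
  proof (rule integral_mono_AE)
    show "integrable lborel (\<lambda>k. M * ((cmod (U k))\<^sup>2 * exp (- e * k\<^sup>2)))"
      by (intro integrable_mult_right Bochner_Integration.integrable_bound[OF Ui])
         (use e mult_exp_neg_le in \<open>auto intro!: AE_I2\<close>)
    show "integrable lborel (\<lambda>k. (cmod (G k))\<^sup>2 * exp (- e * k\<^sup>2))"
      by (intro Bochner_Integration.integrable_bound[OF Gi])
         (use e mult_exp_neg_le in \<open>auto intro!: AE_I2\<close>)
    show "AE k in lborel. M * ((cmod (U k))\<^sup>2 * exp (- e * k\<^sup>2)) \<le> (cmod (G k))\<^sup>2 * exp (- e * k\<^sup>2)"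
      using GU by eventually_elim (simp add: mult.assoc[symmetric] mult_right_mono)
  qed
  finally have "M * IU \<le> IG" .
  with upper show ?thesis unfolding IU_def[symmetric] J_def[symmetric] by (simp add: algebra_simps)
qed

text \<open>Letting e -> 0 in the previous bound: the damped energy tends to the energy of U while the
  oscillation term tends to 0, so U = 0 and therefore u = 0.\<close>
lemma vanishing_under_symbol_domination:
  assumes FU: "is_fourier_L2 u U"
    and FG: "is_fourier_L2 (\<lambda>x. complex_of_real (p x) * u x) G"
    and pq: "AE x in lborel. p x = q x"
    and qc: "continuous_on UNIV q" and qb: "\<And>x. \<bar>q x\<bar> \<le> Q"
    and M: "M > 2 * Q^2"
    and GU: "AE k in lborel. (cmod (G k))^2 \<ge> M * (cmod (U k))^2"
  shows "AE x in lborel. u x = 0"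
proof -
  have qm[measurable]: "q \<in> borel_measurable borel" using qc by (rule borel_measurable_continuous_onI)
  have us: "sq_integrable u" using FU unfolding is_fourier_L2_def by auto
  have Ui: "integrable lborel (\<lambda>k. (cmod (U k))^2)" and [measurable]: "U \<in> borel_measurable borel"
    using FU unfolding is_fourier_L2_def sq_integrable_def by auto
  define e where "e n = 1 / real (Suc n)" for n
  have e_pos: "e n > 0" for n unfolding e_def by simp
  have e_lim: "e \<longlonglongrightarrow> 0" unfolding e_def by (rule LIMSEQ_Suc[OF lim_const_over_n])
  define IU where "IU n = (LINT k|lborel. (cmod (U k))^2 * exp (- e n * k^2))" for n
  define J where "J n = (LINT x|lborel. (cmod (u x))^2 * osc q (e n) x)" for n
  have bound: "IU n \<le> 2 * sqrt (2*pi) * J n / (M - 2 * Q^2)" for n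
    using damped_energy_bound[OF FU FG pq qm qb GU e_pos[of n]] M
    unfolding IU_def J_def by (simp add: field_simps)
  have J_lim: "J \<longlonglongrightarrow> 0" unfolding J_def e_def by (rule integral_osc_tendsto_zero[OF us qc qb])
  have IU_lim: "IU \<longlonglongrightarrow> (LINT k|lborel. (cmod (U k))^2)"
  proof -
    have meas: "(\<lambda>k. (cmod (U k))^2 * exp (- e n * k^2)) \<in> borel_measurable lborel" for n by measurable
    have dom: "AE k in lborel. norm ((cmod (U k))^2 * exp (- e n * k^2)) \<le> (cmod (U k))^2" for n
      using e_pos[of n] mult_exp_neg_le by (auto intro!: AE_I2)
    have "(\<lambda>n. (cmod (U k))^2 * exp (- e n * k^2)) \<longlonglongrightarrow> (cmod (U k))^2 * exp (- 0 * k^2)" for k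
      by (intro tendsto_intros e_lim)
    then have lim: "AE k in lborel. (\<lambda>n. (cmod (U k))^2 * exp (- e n * k^2)) \<longlonglongrightarrow> (cmod (U k))^2"
      by simp
    show ?thesis unfolding IU_def using integral_dominated_convergence[OF _ meas Ui lim dom] by simp
  qed
  have "(LINT k|lborel. (cmod (U k))^2) \<le> 2 * sqrt (2*pi) * 0 / (M - 2 * Q^2)"
  proof (rule LIMSEQ_le[OF IU_lim])
    show "(\<lambda>n. 2 * sqrt (2*pi) * J n / (M - 2 * Q^2)) \<longlonglongrightarrow> 2 * sqrt (2*pi) * 0 / (M - 2 * Q^2)"
      by (intro tendsto_intros J_lim) (use M in simp)
  qed (use bound in blast)
  then have "(LINT k|lborel. (cmod (U k))^2) = 0"
    by (simp add: antisym)
  then have "AE k in lborel. (cmod (U k))^2 = 0"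
    using Ui by (subst integral_nonneg_eq_0_iff_AE[symmetric]) auto
  then have "AE k in lborel. U k = 0" by eventually_elim simp
  then show ?thesis by (rule fourier_L2_zero[OF FU])
qed

text \<open>Take M = 2 Q^2 + 1, Q a bound of the continuous version q of f'(u_c). Beyond the threshold
  given by the symbol estimate, an eigenfunction with Re z <= 0 satisfies the domination hypothesis
  of the vanishing lemma and hence is zero.\<close>

theorem mainTheorem16:
  fixes f f' \<alpha> uc :: "real \<Rightarrow> real" and a b m c :: real
  assumes f_deriv: "\<And>x. (f has_real_derivative f' x) (at x)"
    and f'_cont: "continuous_on UNIV f'"
    and f0: "f 0 = 0" and f'0: "f' 0 = 0"
    and alpha_nonneg: "\<And>k. \<alpha> k \<ge> 0"
    and alpha_locbdd: "\<And>K. compact K \<Longrightarrow> bounded (\<alpha> ` K)"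
    and m_ge: "m \<ge> 1" and a_pos: "a > 0" and b_pos: "b > 0"
    and alpha_growth: "\<exists>R. \<forall>k. \<bar>k\<bar> \<ge> R \<longrightarrow> a * \<bar>k\<bar> powr m \<le> \<alpha> k \<and> \<alpha> k \<le> b * \<bar>k\<bar> powr m"
    and c_pos: "c > 0"
    and uc_H: "sobolev_H m (\<lambda>x. complex_of_real (uc x))"
    and uc_eq: "\<exists>U F. is_fourier_L2 (\<lambda>x. complex_of_real (uc x)) U \<and>
                      is_fourier_L2 (\<lambda>x. complex_of_real (f (uc x))) F \<and>
                      (AE k in lborel. of_real (\<alpha> k) * U k + of_real c * U k - F k = 0)"
    and uc_decay: "(uc \<longlongrightarrow> 0) at_infinity"
  shows "\<exists>\<Lambda>>0. \<forall>lam>\<Lambda>. \<forall>z. Re z \<le> 0 \<longrightarrow> \<not> kdv_eigenvalue f' \<alpha> m c uc lam z"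
proof -
  obtain q Q where q_cont: "continuous_on UNIV q" and q_bound: "\<And>x. \<bar>q x\<bar> \<le> Q"
    and q_ae: "AE x in lborel. f' (uc x) = q x"
    using sobolev_continuous_bounded_coefficient[OF m_ge uc_H f'_cont] by blast
  obtain R where growth: "\<And>k. \<bar>k\<bar> \<ge> R \<Longrightarrow> a * \<bar>k\<bar> powr m \<le> \<alpha> k" using alpha_growth by blast
  have "\<exists>\<Lambda>>0. \<forall>lam>\<Lambda>. \<forall>k. k \<noteq> 0 \<longrightarrow> 2 * Q^2 + 1 \<le> lam^2 / k^2 + 2 * c * \<alpha> k"
    by (rule symbol_lower_bound) (use alpha_nonneg m_ge a_pos c_pos growth in auto)
  then obtain \<Lambda> where \<Lambda>: "\<Lambda> > 0"
    and symbol: "\<And>lam k. lam > \<Lambda> \<Longrightarrow> k \<noteq> 0 \<Longrightarrow> 2 * Q^2 + 1 \<le> lam^2 / k^2 + 2 * c * \<alpha> k"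
    by blast
  have "\<not> kdv_eigenvalue f' \<alpha> m c uc lam z" if lam: "lam > \<Lambda>" and z: "Re z \<le> 0" for lam z
  proof
    assume "kdv_eigenvalue f' \<alpha> m c uc lam z"
    then obtain u U G where FU: "is_fourier_L2 u U"
      and FG: "is_fourier_L2 (\<lambda>x. complex_of_real (f' (uc x)) * u x) G"
      and nonzero: "\<not> (AE x in lborel. u x = 0)"
      and dominated: "AE k in lborel. (cmod (G k))^2 \<ge> (2 * Q^2 + 1) * (cmod (U k))^2"
      by (rule eigenfunction_transform_domination) (use c_pos lam \<Lambda> alpha_nonneg z symbol in auto)
    have "AE x in lborel. u x = 0"
      by (rule vanishing_under_symbol_domination[OF FU FG q_ae q_cont q_bound _ dominated]) simp
    with nonzero show False by simp
  qed
  with \<Lambda> show ?thesis by blast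
qed

end
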